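(* Let $\mathcal{S}$ be a nonempty semigroup (not necessarily finite), with Erdős–Burgess constant $\textsc{I}(\mathcal{S})$ and strong Erdős–Burgess constant $\textsc{SI}(\mathcal{S})$. Then: (i) if $\textsc{I}(\mathcal{S})$ or $\textsc{SI}(\mathcal{S})$ is finite, then the cyclic subsemigroup $\langle x\rangle$ is finite for every $x\in\mathcal{S}$; (ii) $\textsc{I}(\mathcal{S})\le\textsc{SI}(\mathcal{S})$, and if $\mathcal{S}$ is commutative then $\textsc{I}(\mathcal{S})=\textsc{SI}(\mathcal{S})$. Moreover, if $|\mathcal{S}\setminus E(\mathcal{S})|$ is finite, then $\textsc{I}(\mathcal{S})=|\mathcal{S}\setminus E(\mathcal{S})|+1$ if and only if there exists an $\mathcal{S}$-valued sequence $T$ of length $|\mathcal{S}\setminus E(\mathcal{S})|$ such that $\mathcal{R}=\langle\mathrm{supp}(T)\rangle$ is a finite commutative semigroup with $\mathcal{S}\setminus\mathcal{R}\subseteq E(\mathcal{S})$, the universal semilattice $Y(\mathcal{R})$ is a chain, $x_1*x_2=x_1$ for all $x_1,x_2\in\mathcal{R}$ with $x_1\lneqq_{\mathcal{N}_{\mathcal{R}}}x_2$, each archimedean component of $\mathcal{R}$ is either a finite cyclic semigroup $\langle x\rangle$ with $x\in\mathrm{supp}(T)$ and $\mathcal{I}(x)\equiv1\pmod{\mathcal{P}(x)}$ or an ideal extension of a nontrivial finite cyclic group $\langle x_2\rangle$ by a nontrivial finite cyclic nilsemigroup $\langle x_1\rangle$ with $x_1,x_2\in\mathrm{supp}(T)$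 and $x_1*e_{\langle x_2\rangle}=e_{\langle x_2\rangle}$ ($e_{\langle x_2\rangle}$ the identity of $\langle x_2\rangle$), and $\mathrm{v}_x(T)=\mathcal{I}(x)+\mathcal{P}(x)-2$ for each $x\in\mathrm{supp}(T)$.
   Context: $(\mathcal{S},* )$ is a semigroup and $E(\mathcal{S})=\{e: e*e=e\}$. A finite sequence $T$ over $\mathcal{S}$ is (weakly) idempotent-product free if no nonempty subsequence of $T$ has a product, in any order of its terms, lying in $E(\mathcal{S})$; it is strongly idempotent-product free if no nonempty subsequence has its product in the natural order of $T$ lying in $E(\mathcal{S})$. $\textsc{I}(\mathcal{S})$ is the least $\ell\in\mathbb{N}\cup\{\infty\}$ such that every $\mathcal{S}$-valued sequence of length $\ell$ is not weakly idempotent-product free, and $\textsc{SI}(\mathcal{S})$ is the least $\ell\in\mathbb{N}\cup\{\infty\}$ such that every $\mathcal{S}$-valued sequence of length $\ell$ is not strongly idempotent-product free (equivalently, the suprema of $|T|+1$ over the respective free sequences $T$). $\mathrm{supp}(T)$ is the set of elements occurring in $T$, $\mathrm{v}_x(T)$ the multiplicity of $x$ in $T$. Index $\mathcal{I}(x)$: least $r>0$ with $x^r=x^t$ for some positive $t\ne r$; period $\mathcal{P}(x)$: least $k>0$ with $x^{\mathcal{I}(x)+k}=x^{\mathcal{I}(x)}$. For commutative $\mathcal{R}$: $a\leqq_{\mathcal{N}_{\mathcal{R}}}b$ means $a^m=b*c$ for some $c\in\mathcal{R}$, $m>0$; $\lneqq$ means $\leqq$ but not the reverse; $a\,\mathcal{N}_{\mathcal{R}}\,b$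 means both $a\leqq b$ and $b\leqq a$; $Y(\mathcal{R})=\mathcal{R}/\mathcal{N}_{\mathcal{R}}$ is the universal semilattice and its classes are the archimedean components. A nilsemigroup has a zero and every element has a power equal to zero. An ideal extension of $G$ by $Q$ is a semigroup $B$ containing $G$ as an ideal with Rees quotient $B/G\cong Q$. *)

theory Defs
  imports Main "HOL-Library.Extended_Nat" "HOL-Library.Multiset"
begin

(* A semigroup is modelled as a carrier S :: 'a set, closed under the
   (associative) type-class multiplication of 'a :: semigroup_mult. *)

fun sprod :: "'a::semigroup_mult list \<Rightarrow> 'a" where
  "sprod [] = undefined"
| "sprod [x] = x"
| "sprod (x # y # xs) = x * sprod (y # xs)"

fun spow :: "'a::semigroup_mult \<Rightarrow> nat \<Rightarrow> 'a" where
  "spow x 0 = undefined"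
| "spow x (Suc 0) = x"
| "spow x (Suc (Suc n)) = x * spow x (Suc n)"

definition cyc :: "'a::semigroup_mult \<Rightarrow> 'a set" where
  "cyc x = {spow x n | n. n \<ge> 1}"

definition gen :: "'a::semigroup_mult set \<Rightarrow> 'a set" where
  "gen A = {sprod xs | xs. xs \<noteq> [] \<and> set xs \<subseteq> A}"

definition Idem :: "'a::semigroup_mult set \<Rightarrow> 'a set" where
  "Idem S = {e \<in> S. e * e = e}"

(* weakly idempotent-product free: no nonempty subsequence has a product,
   in any order of its terms, that is idempotent *)
definition weak_ipf :: "'a::semigroup_mult set \<Rightarrow> 'a list \<Rightarrow> bool" where
  "weak_ipf S T \<longleftrightarrow>
     (\<forall>U. U \<noteq> [] \<longrightarrow> mset U \<subseteq># mset T \<longrightarrow> sprod U \<notin> Idem S)"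

(* strongly idempotent-product free: no nonempty subsequence has its product,
   taken in the natural order of T, idempotent *)
definition strong_ipf :: "'a::semigroup_mult set \<Rightarrow> 'a list \<Rightarrow> bool" where
  "strong_ipf S T \<longleftrightarrow>
     (\<forall>I. I \<noteq> {} \<longrightarrow> I \<subseteq> {..<length T} \<longrightarrow> sprod (nths T I) \<notin> Idem S)"

(* Erdos-Burgess constant I(S): least l in N \<union> {\<infinity>} such that every
   S-valued sequence of length l is not weakly idempotent-product free *)
definition EB_I :: "'a::semigroup_mult set \<Rightarrow> enat" where
  "EB_I S = Inf {enat l | l. \<forall>T. set T \<subseteq> S \<and> length T = l \<longrightarrow> \<not> weak_ipf S T}"

definition EB_SI :: "'a::semigroup_mult set \<Rightarrow> enat" where
  "EB_SI S = Inf {enat l | l. \<forall>T. set T \<subseteq> S \<and> length T = l \<longrightarrow> \<not> strong_ipf S T}"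

definition commutative_on :: "'a::semigroup_mult set \<Rightarrow> bool" where
  "commutative_on R \<longleftrightarrow> (\<forall>a\<in>R. \<forall>b\<in>R. a * b = b * a)"

definition sindex :: "'a::semigroup_mult \<Rightarrow> nat" where
  "sindex x = (LEAST r. r > 0 \<and> (\<exists>t. t > 0 \<and> t \<noteq> r \<and> spow x r = spow x t))"

definition speriod :: "'a::semigroup_mult \<Rightarrow> nat" where
  "speriod x = (LEAST k. k > 0 \<and> spow x (sindex x + k) = spow x (sindex x))"

definition leqN :: "'a::semigroup_mult set \<Rightarrow> 'a \<Rightarrow> 'a \<Rightarrow> bool" where
  "leqN R a b \<longleftrightarrow> (\<exists>m>0. \<exists>c\<in>R. spow a m = b * c)"

definition lneqN :: "'a::semigroup_mult set \<Rightarrow> 'a \<Rightarrow> 'a \<Rightarrow> bool" where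
  "lneqN R a b \<longleftrightarrow> leqN R a b \<and> \<not> leqN R b a"

definition relN :: "'a::semigroup_mult set \<Rightarrow> 'a \<Rightarrow> 'a \<Rightarrow> bool" where
  "relN R a b \<longleftrightarrow> leqN R a b \<and> leqN R b a"

definition arch_components :: "'a::semigroup_mult set \<Rightarrow> 'a set set" where
  "arch_components R = {{b \<in> R. relN R a b} | a. a \<in> R}"

(* the universal semilattice Y(R) = R/N_R, ordered by [a] \<le> [b] iff a \<le>_N b,
   is a chain *)
definition Y_chain :: "'a::semigroup_mult set \<Rightarrow> bool" where
  "Y_chain R \<longleftrightarrow> (\<forall>a\<in>R. \<forall>b\<in>R. leqN R a b \<or> leqN R b a)"

definition is_identity :: "'a::semigroup_mult set \<Rightarrow> 'a \<Rightarrow> bool" where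
  "is_identity G e \<longleftrightarrow> e \<in> G \<and> (\<forall>g\<in>G. e * g = g \<and> g * e = g)"

definition is_group :: "'a::semigroup_mult set \<Rightarrow> bool" where
  "is_group G \<longleftrightarrow> (\<forall>a\<in>G. \<forall>b\<in>G. a * b \<in> G) \<and>
     (\<exists>e. is_identity G e \<and> (\<forall>g\<in>G. \<exists>h\<in>G. g * h = e \<and> h * g = e))"

definition is_ideal :: "'a::semigroup_mult set \<Rightarrow> 'a set \<Rightarrow> bool" where
  "is_ideal C G \<longleftrightarrow> G \<subseteq> C \<and> (\<forall>c\<in>C. \<forall>g\<in>G. c * g \<in> G \<and> g * c \<in> G)"

(* The Rees quotient C/G is a nontrivial cyclic nilsemigroup generated by the
   class of x: x \<notin> G (nontrivial), every element of C \<setminus> G is a power of x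
   (cyclic, generated by [x]), and some power of x lies in G, i.e. equals the
   zero of C/G (nil). *)
definition rees_cyclic_nil :: "'a::semigroup_mult set \<Rightarrow> 'a set \<Rightarrow> 'a \<Rightarrow> bool" where
  "rees_cyclic_nil C G x \<longleftrightarrow> x \<in> C - G \<and> C - G \<subseteq> cyc x \<and> (\<exists>n\<ge>1. spow x n \<in> G)"

definition ideal_ext_cyc :: "'a::semigroup_mult set \<Rightarrow> 'a \<Rightarrow> 'a \<Rightarrow> bool" where
  "ideal_ext_cyc C x1 x2 \<longleftrightarrow>
     (\<forall>a\<in>C. \<forall>b\<in>C. a * b \<in> C) \<and> finite C \<and>
     is_group (cyc x2) \<and> finite (cyc x2) \<and> card (cyc x2) \<ge> 2 \<and>
     is_ideal C (cyc x2) \<and> rees_cyclic_nil C (cyc x2) x1"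

end

theory Submission
  imports Defs
begin

(* For a weakly idempotent-product free sequence T, appending a term strictly enlarges the set
   of products of sub-multisets of T (otherwise that set would contain every power of the new
   term, hence an idempotent), and all these products are non-idempotent; so
   |T| <= |S - E(S)|. When equality holds, the products exhaust S - E(S) and every pair of
   terms contributes at most two products, so distinct terms x, y satisfy x * y in {x, y}.
   The support is then a chain under absorption, <supp T> is the union of the cyclic
   subsemigroups of its elements, and counting non-idempotent powers gives
   v_x(T) = I(x) + P(x) - 2 and I(x) = 1 mod P(x). Conversely, under the listed structure
   every sub-product is a power x^k of its least factor with k <= I(x) + P(x) - 2, which is
   not idempotent. Parts (i) and (ii) are immediate: an element with infinite <x> gives free
   constant sequences of every length, and weak freeness implies strong freeness, with
   equality for commutative S. *)

section \<open>Powers and cyclic subsemigroups\<close>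

lemma spow_Suc: "n \<ge> 1 \<Longrightarrow> spow x (Suc n) = x * spow x n"
  by (cases n) auto

lemma spow_add: "m \<ge> 1 \<Longrightarrow> n \<ge> 1 \<Longrightarrow> spow x (m + n) = spow x m * spow x n"
proof (induction m rule: nat_induct_at_least)
  case base
  then show ?case using spow_Suc[of n x] by simp
next
  case (Suc m)
  then show ?case by (simp add: spow_Suc mult.assoc)
qed

lemma spow_Suc': "n \<ge> 1 \<Longrightarrow> spow x (Suc n) = spow x n * x"
  using spow_add[of n 1 x] by simp

lemma spow_mult: "n \<ge> 1 \<Longrightarrow> m \<ge> 1 \<Longrightarrow> spow (spow x m) n = spow x (m * n)"
proof (induction n rule: nat_induct_at_least)
  case (Suc n)
  then show ?case by (simp add: spow_Suc spow_add[symmetric])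
qed simp

lemma spow_idem: "n \<ge> 1 \<Longrightarrow> e * e = e \<Longrightarrow> spow e n = e"
  by (induction n rule: nat_induct_at_least) (auto simp: spow_Suc)

lemma spow_closed:
  "n \<ge> 1 \<Longrightarrow> x \<in> S \<Longrightarrow> \<forall>a\<in>S. \<forall>b\<in>S. a * b \<in> S \<Longrightarrow> spow x n \<in> S"
  by (induction n rule: nat_induct_at_least) (auto simp: spow_Suc)

lemma sprod_Cons: "xs \<noteq> [] \<Longrightarrow> sprod (x # xs) = x * sprod xs"
  by (cases xs) auto

lemma sprod_append: "xs \<noteq> [] \<Longrightarrow> ys \<noteq> [] \<Longrightarrow> sprod (xs @ ys) = sprod xs * sprod ys"
  by (induction xs rule: induct_list012) (auto simp: sprod_Cons mult.assoc)

lemma sprod_snoc: "xs \<noteq> [] \<Longrightarrow> sprod (xs @ [x]) = sprod xs * x"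
  using sprod_append[of xs "[x]"] by simp

lemma sprod_replicate: "n \<ge> 1 \<Longrightarrow> sprod (replicate n x) = spow x n"
  by (induction n rule: nat_induct_at_least) (auto simp: sprod_Cons spow_Suc)

lemma sprod_closed:
  "xs \<noteq> [] \<Longrightarrow> set xs \<subseteq> S \<Longrightarrow> \<forall>a\<in>S. \<forall>b\<in>S. a * b \<in> S \<Longrightarrow> sprod xs \<in> S"
  by (induction xs rule: induct_list012) (auto simp: sprod_Cons)

lemma one_le_count_list: "x \<in> set xs \<Longrightarrow> 1 \<le> count_list xs x"
  by (metis count_list_0_iff less_one not_le)

lemma spow_in_cyc: "n \<ge> 1 \<Longrightarrow> spow x n \<in> cyc x"
  unfolding cyc_def by auto

lemma cyc_self: "x \<in> cyc x"
  using spow_in_cyc[of 1 x] by simp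

lemma cycE:
  assumes "u \<in> cyc x"
  obtains n where "n \<ge> 1" "u = spow x n"
  using assms unfolding cyc_def by auto

lemma cyc_mult_closed:
  assumes "a \<in> cyc x" "b \<in> cyc x"
  shows "a * b \<in> cyc x"
proof -
  obtain i j where "i \<ge> 1" "a = spow x i" "j \<ge> 1" "b = spow x j"
    using assms by (elim cycE)
  then show ?thesis
    using spow_add[of i j x] spow_in_cyc[of "i + j" x] by simp
qed

lemma cyc_spow_closed:
  assumes "a \<in> cyc x" "n \<ge> 1"
  shows "spow a n \<in> cyc x"
proof -
  obtain i where "i \<ge> 1" "a = spow x i"
    using assms(1) by (elim cycE)
  then show ?thesis
    using spow_mult[of n i x] spow_in_cyc[of "i * n" x] assms(2) by simp
qed

lemma cyc_commute:
  assumes "a \<in> cyc x" "b \<in> cyc x"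
  shows "a * b = b * a"
proof -
  obtain i j where "i \<ge> 1" "a = spow x i" "j \<ge> 1" "b = spow x j"
    using assms by (elim cycE)
  then show ?thesis
    using spow_add[of i j x] spow_add[of j i x] by (simp add: add.commute)
qed

lemma cyc_subset: "x \<in> S \<Longrightarrow> \<forall>a\<in>S. \<forall>b\<in>S. a * b \<in> S \<Longrightarrow> cyc x \<subseteq> S"
  unfolding cyc_def using spow_closed by blast

lemma cyc_subset_gen_of:
  assumes "x \<in> A"
  shows "cyc x \<subseteq> gen A"
proof
  fix r
  assume "r \<in> cyc x"
  then obtain n where "n \<ge> 1" "r = spow x n"
    by (elim cycE)
  then have "r = sprod (replicate n x)" "replicate n x \<noteq> []" "set (replicate n x) \<subseteq> A"
    using sprod_replicate[of n x] assms by auto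
  then show "r \<in> gen A"
    unfolding gen_def by blast
qed

lemma gen_subset: "A \<subseteq> S \<Longrightarrow> \<forall>a\<in>S. \<forall>b\<in>S. a * b \<in> S \<Longrightarrow> gen A \<subseteq> S"
  unfolding gen_def using sprod_closed by blast

lemma idempotent_in_cyc_unique:
  assumes "e1 \<in> cyc x" "e2 \<in> cyc x" "e1 * e1 = e1" "e2 * e2 = e2"
  shows "e1 = e2"
proof -
  obtain i j where ij: "i \<ge> 1" "e1 = spow x i" "j \<ge> 1" "e2 = spow x j"
    using assms(1,2) by (elim cycE)
  have "e1 = spow e1 j" "e2 = spow e2 i"
    using spow_idem[of j e1] spow_idem[of i e2] ij assms(3,4) by auto
  then show ?thesis
    using spow_mult[of j i x] spow_mult[of i j x] ij by (simp add: mult.commute)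
qed

section \<open>Index and period\<close>

lemma spow_shift: "a \<ge> 1 \<Longrightarrow> b \<ge> 1 \<Longrightarrow> spow x a = spow x b \<Longrightarrow> spow x (a + n) = spow x (b + n)"
  by (cases "n = 0") (auto simp: spow_add)

lemma spow_add_period:
  assumes "a \<ge> 1" "spow x a = spow x (a + d)" "n \<ge> a"
  shows "spow x (n + d) = spow x n"
proof -
  have "spow x (a + (n - a)) = spow x (a + d + (n - a))"
    using spow_shift[OF _ _ assms(2), of "n - a"] assms(1) by (simp add: add.assoc)
  then show ?thesis
    using assms(3) by (simp add: algebra_simps)
qed

lemma spow_add_period_mult:
  assumes "a \<ge> 1" "spow x a = spow x (a + d)" "n \<ge> a"
  shows "spow x (n + m * d) = spow x n"
proof (induction m)
  case (Suc m)
  have "spow x (n + Suc m * d) = spow x ((n + m * d) + d)"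
    by (simp add: algebra_simps)
  also have "\<dots> = spow x (n + m * d)"
    using spow_add_period[OF assms(1,2), of "n + m * d"] assms(3) by simp
  finally show ?case
    using Suc by simp
qed simp

lemma spow_reduce_period:
  assumes "a \<ge> 1" "spow x a = spow x (a + d)" "n \<ge> a"
  shows "spow x n = spow x (a + (n - a) mod d)"
proof -
  have "n = (a + (n - a) mod d) + ((n - a) div d) * d"
    using assms(3) mod_div_mult_eq[of "n - a" d] by linarith
  then show ?thesis
    using spow_add_period_mult[OF assms(1,2)] by (metis le_add1)
qed

lemma cyc_subset_initial_powers:
  assumes "a \<ge> 1" "spow x a = spow x (a + d)" "d > 0"
  shows "cyc x \<subseteq> spow x ` {1..<a + d}"
proof
  fix y
  assume "y \<in> cyc x"
  then obtain n where n: "n \<ge> 1" "y = spow x n"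
    by (elim cycE)
  show "y \<in> spow x ` {1..<a + d}"
  proof (cases "n < a + d")
    case False
    then have "y = spow x (a + (n - a) mod d)"
      using spow_reduce_period[OF assms(1,2), of n] n by simp
    moreover have "a + (n - a) mod d \<in> {1..<a + d}"
      using assms by auto
    ultimately show ?thesis
      by blast
  qed (use n in auto)
qed

lemma finite_cyc_if_spow_eq:
  assumes "a \<ge> 1" "b \<ge> 1" "a \<noteq> b" "spow x a = spow x b"
  shows "finite (cyc x)"
proof -
  have "cyc x \<subseteq> spow x ` {1..<min a b + (max a b - min a b)}"
    using assms by (intro cyc_subset_initial_powers) (auto simp: min_def max_def)
  then show ?thesis
    using finite_subset by blast
qed

lemma spow_eq_if_finite_cyc:
  assumes "finite (cyc x)"
  shows "\<exists>r t. r > 0 \<and> t > 0 \<and> t \<noteq> r \<and> spow x r = spow x t"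
proof (rule ccontr)
  assume "\<not> ?thesis"
  then have "inj (\<lambda>n. spow x (Suc n))"
    by (intro injI) (metis Suc_inject zero_less_Suc)
  moreover have "range (\<lambda>n. spow x (Suc n)) \<subseteq> cyc x"
    using spow_in_cyc by auto
  ultimately show False
    using assms finite_subset finite_imageD by (metis infinite_UNIV_nat)
qed

lemma sindex_spec:
  assumes "finite (cyc x)"
  shows "sindex x > 0 \<and> (\<exists>t. t > 0 \<and> t \<noteq> sindex x \<and> spow x (sindex x) = spow x t)"
proof -
  obtain r where "r > 0 \<and> (\<exists>t. t > 0 \<and> t \<noteq> r \<and> spow x r = spow x t)"
    using spow_eq_if_finite_cyc[OF assms] by blast
  then show ?thesis
    unfolding sindex_def by (rule LeastI)
qed

lemma spow_inj_below_sindex: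
  "0 < r \<Longrightarrow> r < sindex x \<Longrightarrow> t > 0 \<Longrightarrow> t \<noteq> r \<Longrightarrow> spow x r \<noteq> spow x t"
  unfolding sindex_def using not_less_Least by blast

lemma sindex_le:
  "r > 0 \<Longrightarrow> t > 0 \<Longrightarrow> t \<noteq> r \<Longrightarrow> spow x r = spow x t \<Longrightarrow> sindex x \<le> r"
  unfolding sindex_def by (rule Least_le) blast

lemma speriod_spec:
  assumes "finite (cyc x)"
  shows "speriod x > 0 \<and> spow x (sindex x + speriod x) = spow x (sindex x)"
proof -
  obtain t where t: "t > 0" "t \<noteq> sindex x" "spow x (sindex x) = spow x t"
    using sindex_spec[OF assms] by blast
  then have "t > sindex x"
    using spow_inj_below_sindex[of t x "sindex x"] sindex_spec[OF assms] by fastforce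
  then have "t - sindex x > 0 \<and> spow x (sindex x + (t - sindex x)) = spow x (sindex x)"
    using t by simp
  then show ?thesis
    unfolding speriod_def by (rule LeastI)
qed

lemma spow_ne_below_speriod:
  "0 < k \<Longrightarrow> k < speriod x \<Longrightarrow> spow x (sindex x + k) \<noteq> spow x (sindex x)"
  unfolding speriod_def using not_less_Least by blast

lemma speriod_le:
  "k > 0 \<Longrightarrow> spow x (sindex x + k) = spow x (sindex x) \<Longrightarrow> speriod x \<le> k"
  unfolding speriod_def by (rule Least_le) blast

locale monogenic =
  fixes x :: "'a::semigroup_mult"
  assumes finite_cyc: "finite (cyc x)"
begin

abbreviation "I \<equiv> sindex x"
abbreviation "P \<equiv> speriod x"

lemma index_pos: "I \<ge> 1"
  using sindex_spec[OF finite_cyc] by simp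

lemma period_pos: "P \<ge> 1"
  using speriod_spec[OF finite_cyc] by simp

lemma spow_index_period: "spow x I = spow x (I + P)"
  using speriod_spec[OF finite_cyc] by simp

lemma spow_add_periods: "n \<ge> I \<Longrightarrow> spow x (n + m * P) = spow x n"
  using spow_add_period_mult[OF index_pos spow_index_period] .

text \<open>Shifting a coincidence \<open>x\<^sup>a = x\<^sup>b\<close> with \<open>I \<le> a < b < I + P\<close> so that \<open>a\<close> becomes
  \<open>I\<close> plus a multiple of \<open>P\<close> gives \<open>x\<^bsup>I + (b - a)\<^esup> = x\<^sup>I\<close>, contradicting the minimality of \<open>P\<close>.\<close>
lemma spow_inj:
  assumes "1 \<le> a" "a < b" "b < I + P"
  shows "spow x a \<noteq> spow x b"
proof
  assume eq: "spow x a = spow x b"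
  have "a \<ge> I"
    using spow_inj_below_sindex[of a x b] eq assms by force
  then obtain k where k: "a = I + k"
    using le_Suc_ex by blast
  obtain p where p: "P = Suc p"
    using period_pos not0_implies_Suc by fastforce
  define n where "n = k * p"
  have an: "a + n = I + k * P" and bn: "b + n = (I + (b - a)) + k * P"
    using k p assms(2) unfolding n_def by (auto simp: algebra_simps)
  have "spow x (a + n) = spow x (b + n)"
    using spow_shift[OF assms(1) _ eq] assms by simp
  then have "spow x (I + (b - a)) = spow x I"
    unfolding an bn using spow_add_periods by simp
  moreover have "0 < b - a" "b - a < P"
    using assms k by auto
  ultimately show False
    using spow_ne_below_speriod by blast
qed

lemma cyc_eq_image: "cyc x = spow x ` {1..<I + P}"
  using cyc_subset_initial_powers[OF index_pos spow_index_period] period_pos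
  unfolding cyc_def by auto

lemma card_cyc: "card (cyc x) = I + P - 1"
proof -
  have "inj_on (spow x) {1..<I + P}"
    by (rule inj_onI) (metis atLeastLessThan_iff linorder_neqE_nat spow_inj)
  then show ?thesis
    unfolding cyc_eq_image by (simp add: card_image)
qed

lemma spow_idem_if_period_dvd:
  assumes "j \<ge> I" "P dvd j"
  shows "spow x j * spow x j = spow x j"
proof -
  obtain m where m: "j = m * P"
    using assms(2) by (metis dvd_def mult.commute)
  have "j \<ge> 1"
    using assms(1) index_pos by simp
  then have "spow x j * spow x j = spow x (j + m * P)"
    using m spow_add[of j j x] by simp
  also have "\<dots> = spow x j"
    using spow_add_periods assms(1) by simp
  finally show ?thesis .
qed

lemma idempotent_power:
  "spow x (I * P) \<in> cyc x" "spow x (I * P) * spow x (I * P) = spow x (I * P)"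
  using spow_in_cyc[of "I * P" x] spow_idem_if_period_dvd[of "I * P"] index_pos period_pos
  by auto

lemma card_cyc_minus_Idem:
  assumes "cyc x \<subseteq> S"
  shows "card (cyc x - Idem S) = I + P - 2"
proof -
  have "cyc x \<inter> Idem S = {spow x (I * P)}"
    using idempotent_power assms idempotent_in_cyc_unique unfolding Idem_def by blast
  then have "cyc x - Idem S = cyc x - {spow x (I * P)}"
    by blast
  then show ?thesis
    using card_cyc idempotent_power(1) finite_cyc by simp
qed

text \<open>The idempotent of \<open>\<langle>x\<rangle>\<close> is the power \<open>x\<^sup>j\<close> with \<open>I \<le> j < I + P\<close> and \<open>P dvd j\<close>; it is the
  last one, \<open>x\<^bsup>I+P-1\<^esup>\<close>, exactly when \<open>P dvd I - 1\<close>.\<close>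
lemma nonidempotent_powers_iff:
  "(\<forall>k. 1 \<le> k \<longrightarrow> k \<le> I + P - 2 \<longrightarrow> spow x k * spow x k \<noteq> spow x k)
    \<longleftrightarrow> I mod P = 1 mod P"
proof -
  have "I + P - 1 = (I - 1) + P"
    using index_pos by simp
  then have "P dvd I + P - 1 \<longleftrightarrow> P dvd I - 1"
    using dvd_add_left_iff[OF dvd_refl] by metis
  then have dvd_iff: "P dvd I + P - 1 \<longleftrightarrow> I mod P = 1 mod P"
    using index_pos mod_eq_dvd_iff_nat[of 1 I P] by simp
  define j where "j = ((I + P - 1) div P) * P"
  have j: "I \<le> j" "j \<le> I + P - 1" "P dvd j"
    using div_mult_mod_eq[of "I + P - 1" P] mod_less_divisor[of P "I + P - 1"] period_pos
    unfolding j_def by linarith+ simp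
  have last_idem: "spow x (I + P - 1) * spow x (I + P - 1) = spow x (I + P - 1)"
    if "I mod P = 1 mod P"
    using spow_idem_if_period_dvd[of "I + P - 1"] that dvd_iff period_pos by simp
  show ?thesis
  proof
    assume nonidem: "\<forall>k. 1 \<le> k \<longrightarrow> k \<le> I + P - 2 \<longrightarrow> spow x k * spow x k \<noteq> spow x k"
    have "\<not> j \<le> I + P - 2"
      using nonidem spow_idem_if_period_dvd[OF j(1,3)] j(1) index_pos by auto
    then have "j = I + P - 1"
      using j(2) by linarith
    then show "I mod P = 1 mod P"
      using j(3) dvd_iff by simp
  next
    assume mod: "I mod P = 1 mod P"
    show "\<forall>k. 1 \<le> k \<longrightarrow> k \<le> I + P - 2 \<longrightarrow> spow x k * spow x k \<noteq> spow x k"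
    proof (intro allI impI notI)
      fix k
      assume k: "1 \<le> k" "k \<le> I + P - 2" "spow x k * spow x k = spow x k"
      then have "spow x k = spow x (I + P - 1)"
        using idempotent_in_cyc_unique[OF spow_in_cyc[of k x] spow_in_cyc[of "I + P - 1" x]]
          last_idem[OF mod] index_pos by simp
      moreover have "k < I + P - 1"
        using k(2) index_pos period_pos by linarith
      ultimately show False
        using spow_inj[of k "I + P - 1"] k(1) index_pos by simp
    qed
  qed
qed

lemma speriod_eq_1_if_spow_Suc:
  assumes "n \<ge> 1" "spow x (n + 1) = spow x n"
  shows "P = 1"
proof -
  have "n \<le> n * P"
    using period_pos by (metis mult.right_neutral mult_le_mono2)
  have "spow x (I + 1) = spow x ((I + n * P) + 1)"
    using spow_add_periods[of "I + 1" n] by (simp add: algebra_simps)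
  also have "\<dots> = spow x (I + n * P)"
    using spow_add_period[of n x 1 "I + n * P"] assms \<open>n \<le> n * P\<close> by simp
  also have "\<dots> = spow x I"
    using spow_add_periods by simp
  finally show ?thesis
    using speriod_le[of 1 x] period_pos by simp
qed

end

lemma sindex_eq_1_if_spow_Suc:
  assumes "j \<ge> 1" "spow x (Suc j) = x"
  shows "sindex x = 1"
proof -
  have "finite (cyc x)"
    using finite_cyc_if_spow_eq[of 1 "Suc j" x] assms by simp
  then have "sindex x > 0"
    using sindex_spec by blast
  moreover have "sindex x \<le> 1"
    using sindex_le[of 1 "Suc j" x] assms by simp
  ultimately show ?thesis
    by simp
qed

lemma sindex_speriod_idem:
  assumes "x * x = x"
  shows "sindex x = 1" "speriod x = 1"
proof -
  have "spow x (Suc 1) = x"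
    using assms by simp
  then show "sindex x = 1"
    using sindex_eq_1_if_spow_Suc by blast
  then interpret monogenic x
    using finite_cyc_if_spow_eq[of 1 2 x] assms by unfold_locales (simp add: numeral_2_eq_2)
  show "speriod x = 1"
    using speriod_eq_1_if_spow_Suc[of 1] assms by simp
qed

section \<open>Weak and strong idempotent-product freeness\<close>

lemma mset_nths_subseteq: "mset (nths xs I) \<subseteq># mset xs"
proof (induction xs arbitrary: I)
  case (Cons a xs)
  have "mset (nths xs {j. Suc j \<in> I}) \<subseteq># mset xs"
    by (rule Cons.IH)
  moreover have "\<And>A B. (A::'a multiset) \<subseteq># B \<Longrightarrow> A \<subseteq># add_mset a B"
    by (meson multi_psub_of_add_self subset_mset.le_less subset_mset.trans)
  ultimately show ?case
    by (auto simp: nths_Cons)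
qed simp

lemma nths_not_Nil: "I \<noteq> {} \<Longrightarrow> I \<subseteq> {..<length xs} \<Longrightarrow> nths xs I \<noteq> []"
proof -
  assume "I \<noteq> {}" "I \<subseteq> {..<length xs}"
  then obtain i where "i \<in> I" "i < length xs"
    by blast
  then have "xs ! i \<in> set (nths xs I)"
    unfolding set_nths by blast
  then show ?thesis
    by auto
qed

lemma ex_nths_eq_mset:
  "mset ys \<subseteq># mset xs \<Longrightarrow> \<exists>I \<subseteq> {..<length xs}. mset (nths xs I) = mset ys"
proof (induction xs arbitrary: ys)
  case (Cons a xs)
  show ?case
  proof (cases "a \<in> set ys")
    case True
    then have "mset (remove1 a ys) \<subseteq># mset xs"
      using Cons.prems by (metis insert_DiffM mset.simps(2) mset_remove1
          mset_subset_eq_add_mset_cancel set_mset_mset)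
    then obtain J where J: "J \<subseteq> {..<length xs}" "mset (nths xs J) = mset (remove1 a ys)"
      using Cons.IH by blast
    have "nths (a # xs) (insert 0 (Suc ` J)) = a # nths xs J"
      by (simp add: nths_Cons image_iff)
    then show ?thesis
      using J True by (intro exI[of _ "insert 0 (Suc ` J)"]) auto
  next
    case False
    then have "mset ys \<subseteq># mset xs"
      using Cons.prems by (metis Diff_eq_empty_iff_mset minus_add_mset_if_not_in_lhs
          mset.simps(2) set_mset_mset)
    then obtain J where J: "J \<subseteq> {..<length xs}" "mset (nths xs J) = mset ys"
      using Cons.IH by blast
    have "nths (a # xs) (Suc ` J) = nths xs J"
      by (simp add: nths_Cons image_iff)
    then show ?thesis
      using J by (intro exI[of _ "Suc ` J"]) auto
  qed
qed simp

lemma sprod_move_commuting: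
  assumes "\<forall>y\<in>set xs. a * y = y * a" "xs @ ys \<noteq> []"
  shows "sprod (xs @ a # ys) = a * sprod (xs @ ys)"
  using assms
proof (induction xs)
  case (Cons b xs)
  show ?case
  proof (cases "xs @ ys = []")
    case False
    have "sprod ((b # xs) @ a # ys) = b * (a * sprod (xs @ ys))"
      using Cons False by (simp add: sprod_Cons)
    also have "\<dots> = a * (b * sprod (xs @ ys))"
      using Cons.prems by (simp add: mult.assoc[symmetric])
    finally show ?thesis
      using False by (simp add: sprod_Cons)
  qed (use Cons.prems in simp)
qed (simp add: sprod_Cons)

lemma sprod_mset_eq:
  assumes "commutative_on S" "set xs \<subseteq> S" "mset xs = mset ys" "xs \<noteq> []"
  shows "sprod xs = sprod ys"
  using assms(2-4)
proof (induction xs arbitrary: ys)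
  case (Cons a xs)
  have "a \<in> set ys"
    using Cons.prems(2) by (metis list.set_intros(1) set_mset_mset)
  then obtain ys1 ys2 where ys: "ys = ys1 @ a # ys2"
    by (meson split_list)
  have m: "mset xs = mset (ys1 @ ys2)"
    using Cons.prems(2) ys by simp
  show ?case
  proof (cases "xs = []")
    case False
    have "set ys \<subseteq> S"
      using Cons.prems(1,2) by (metis set_mset_mset)
    then have "\<forall>y\<in>set ys1. a * y = y * a"
      using assms(1) ys Cons.prems(1) unfolding commutative_on_def by auto
    moreover have "ys1 @ ys2 \<noteq> []"
      using m False by auto
    ultimately show ?thesis
      using Cons.IH[OF _ m False] Cons.prems(1) False ys by (simp add: sprod_Cons sprod_move_commuting)
  qed (use m ys in simp)
qed simp

lemma weak_ipf_submset: "weak_ipf S T \<Longrightarrow> mset V \<subseteq># mset T \<Longrightarrow> weak_ipf S V"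
  unfolding weak_ipf_def using subset_mset.order_trans by blast

lemma weak_ipf_imp_strong_ipf: "weak_ipf S T \<Longrightarrow> strong_ipf S T"
  unfolding weak_ipf_def strong_ipf_def using mset_nths_subseteq nths_not_Nil by blast

lemma strong_ipf_imp_weak_ipf:
  assumes "commutative_on S" "set T \<subseteq> S" "strong_ipf S T"
  shows "weak_ipf S T"
  unfolding weak_ipf_def
proof (intro allI impI)
  fix U
  assume U: "U \<noteq> []" "mset U \<subseteq># mset T"
  obtain I where I: "I \<subseteq> {..<length T}" "mset (nths T I) = mset U"
    using ex_nths_eq_mset[OF U(2)] by blast
  have "I \<noteq> {}"
    using I U(1) by auto
  then have "sprod (nths T I) \<notin> Idem S"
    using assms(3) I(1) unfolding strong_ipf_def by blast
  moreover have "set (nths T I) \<subseteq> S"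
    using assms(2) set_nths_subset by fastforce
  ultimately show "sprod U \<notin> Idem S"
    using sprod_mset_eq[OF assms(1) _ I(2)] nths_not_Nil[OF \<open>I \<noteq> {}\<close> I(1)] by metis
qed

section \<open>Products of sub-multisets\<close>

definition subprods :: "'a::semigroup_mult list \<Rightarrow> 'a set" where
  "subprods T = {sprod U | U. U \<noteq> [] \<and> mset U \<subseteq># mset T}"

lemma sprod_in_subprods: "U \<noteq> [] \<Longrightarrow> mset U \<subseteq># mset T \<Longrightarrow> sprod U \<in> subprods T"
  unfolding subprods_def by blast

lemma subprods_mono: "mset V \<subseteq># mset W \<Longrightarrow> subprods V \<subseteq> subprods W"
  unfolding subprods_def using subset_mset.order_trans by blast

lemma subprods_mset_eq: "mset V = mset W \<Longrightarrow> subprods V = subprods W"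
  unfolding subprods_def by simp

lemma subprods_Nil: "subprods [] = {}"
  unfolding subprods_def by auto

lemma subprods_subset_nonidem:
  assumes "set T \<subseteq> S" "\<forall>a\<in>S. \<forall>b\<in>S. a * b \<in> S" "weak_ipf S T"
  shows "subprods T \<subseteq> S - Idem S"
proof
  fix y
  assume "y \<in> subprods T"
  then obtain U where U: "y = sprod U" "U \<noteq> []" "mset U \<subseteq># mset T"
    unfolding subprods_def by blast
  then have "set U \<subseteq> S"
    using assms(1) by (metis mset_subset_eqD set_mset_mset subset_iff)
  then show "y \<in> S - Idem S"
    using sprod_closed U assms(2,3) unfolding weak_ipf_def by blast
qed

text \<open>If \<open>x\<close> added nothing, \<open>subprods (x # T)\<close> would contain all powers of \<open>x\<close>, among them
  an idempotent.\<close>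
lemma subprods_Cons_psubset:
  assumes "set (x # T) \<subseteq> S" "\<forall>a\<in>S. \<forall>b\<in>S. a * b \<in> S" "weak_ipf S (x # T)"
    "finite (S - Idem S)"
  shows "subprods T \<subset> subprods (x # T)"
proof -
  have nonidem: "subprods (x # T) \<subseteq> S - Idem S"
    using subprods_subset_nonidem[OF assms(1-3)] .
  have "subprods T \<subseteq> subprods (x # T)"
    by (rule subprods_mono) simp
  moreover have "subprods T \<noteq> subprods (x # T)"
  proof
    assume eq: "subprods T = subprods (x # T)"
    have powers: "spow x n \<in> subprods (x # T)" if "n \<ge> 1" for n
      using that
    proof (induction n rule: nat_induct_at_least)
      case base
      show ?case
        using sprod_in_subprods[of "[x]" "x # T"] by simp
    next
      case (Suc n)
      then obtain U where U: "spow x n = sprod U" "U \<noteq> []" "mset U \<subseteq># mset T"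
        using eq unfolding subprods_def by blast
      then have "sprod (U @ [x]) \<in> subprods (x # T)"
        by (intro sprod_in_subprods) auto
      then show ?case
        using U Suc.hyps by (simp add: sprod_snoc spow_Suc')
    qed
    then have "cyc x \<subseteq> S - Idem S"
      using nonidem unfolding cyc_def by blast
    then interpret monogenic x
      using assms(4) finite_subset by unfold_locales blast
    have "spow x (I * P) \<in> S - Idem S"
      using idempotent_power(1) \<open>cyc x \<subseteq> S - Idem S\<close> by blast
    then show False
      using idempotent_power(2) unfolding Idem_def by blast
  qed
  ultimately show ?thesis
    by blast
qed

lemma card_subprods_append:
  assumes "set (L @ V) \<subseteq> S" "\<forall>a\<in>S. \<forall>b\<in>S. a * b \<in> S" "weak_ipf S (L @ V)"
    "finite (S - Idem S)"
  shows "card (subprods V) + length L \<le> card (subprods (L @ V))"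
  using assms(1,3)
proof (induction L)
  case (Cons a L)
  have "subprods (L @ V) \<subset> subprods (a # L @ V)"
    using subprods_Cons_psubset[of a "L @ V" S] Cons.prems assms(2,4) by simp
  moreover have "finite (subprods (a # L @ V))"
    using subprods_subset_nonidem[of "a # L @ V" S] Cons.prems assms(2,4) finite_subset by auto
  ultimately have "card (subprods (L @ V)) < card (subprods (a # L @ V))"
    by (rule psubset_card_mono[rotated])
  moreover have "weak_ipf S (L @ V)"
    using weak_ipf_submset[OF Cons.prems(2)] by simp
  ultimately show ?case
    using Cons.IH Cons.prems(1) by simp
qed simp

lemma length_le_card_subprods:
  assumes "set T \<subseteq> S" "\<forall>a\<in>S. \<forall>b\<in>S. a * b \<in> S" "weak_ipf S T" "finite (S - Idem S)"
  shows "length T \<le> card (subprods T)"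
  using card_subprods_append[of T "[]" S] assms by (simp add: subprods_Nil)

lemma weak_ipf_length_le:
  assumes "set T \<subseteq> S" "\<forall>a\<in>S. \<forall>b\<in>S. a * b \<in> S" "weak_ipf S T" "finite (S - Idem S)"
  shows "length T \<le> card (S - Idem S)"
  using length_le_card_subprods[OF assms] subprods_subset_nonidem[OF assms(1-3)] assms(4)
  by (meson card_mono le_trans)

text \<open>Each term outside \<open>V\<close> adds a new product, and there are only \<open>card (S - Idem S)\<close> of
  them.\<close>
lemma card_subprods_le_length:
  assumes "set T \<subseteq> S" "\<forall>a\<in>S. \<forall>b\<in>S. a * b \<in> S" "weak_ipf S T" "finite (S - Idem S)"
    "length T = card (S - Idem S)" "mset V \<subseteq># mset T"
  shows "card (subprods V) \<le> length V"
proof -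
  obtain L where L: "mset L = mset T - mset V"
    using ex_mset by blast
  have m: "mset (L @ V) = mset T"
    using L assms(6) by simp
  have "set (L @ V) \<subseteq> S"
    using assms(1) m by (metis set_mset_mset)
  then have "card (subprods V) + length L \<le> card (subprods (L @ V))"
    using assms(2,4) weak_ipf_submset[OF assms(3)] m by (intro card_subprods_append) auto
  also have "\<dots> \<le> card (S - Idem S)"
    using subprods_mset_eq[OF m] subprods_subset_nonidem[OF assms(1-3)] assms(4) card_mono by metis
  finally show ?thesis
    using assms(5) m by (metis add_le_cancel_left length_append size_mset add.commute)
qed

lemma subprods_eq_nonidem:
  assumes "set T \<subseteq> S" "\<forall>a\<in>S. \<forall>b\<in>S. a * b \<in> S" "weak_ipf S T" "finite (S - Idem S)"
    "length T = card (S - Idem S)"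
  shows "subprods T = S - Idem S"
  using length_le_card_subprods[OF assms(1-4)] subprods_subset_nonidem[OF assms(1-3)] assms(4,5)
  by (simp add: card_seteq)

section \<open>The Erdos--Burgess constants\<close>

lemma EB_I_le_iff_no_weak_ipf:
  "EB_I S \<le> enat l \<longleftrightarrow> (\<forall>T. set T \<subseteq> S \<and> length T = l \<longrightarrow> \<not> weak_ipf S T)"
proof
  assume "EB_I S \<le> enat l"
  then have "EB_I S < enat (Suc l)"
    by (simp add: le_less_trans)
  then obtain l' where l': "l' \<le> l" "\<forall>T. set T \<subseteq> S \<and> length T = l' \<longrightarrow> \<not> weak_ipf S T"
    unfolding EB_I_def Inf_less_iff by (auto simp: less_Suc_eq_le)
  show "\<forall>T. set T \<subseteq> S \<and> length T = l \<longrightarrow> \<not> weak_ipf S T"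
  proof (intro allI impI notI)
    fix T
    assume T: "set T \<subseteq> S \<and> length T = l" "weak_ipf S T"
    have "mset (take l' T) \<subseteq># mset T"
      by (metis append_take_drop_id mset_append mset_subset_eq_add_left)
    then show False
      using l' T weak_ipf_submset[of S T "take l' T"] set_take_subset[of l' T] by auto
  qed
next
  assume "\<forall>T. set T \<subseteq> S \<and> length T = l \<longrightarrow> \<not> weak_ipf S T"
  then show "EB_I S \<le> enat l"
    unfolding EB_I_def by (intro Inf_lower) blast
qed


lemma EB_I_le_card_nonidem:
  assumes "\<forall>a\<in>S. \<forall>b\<in>S. a * b \<in> S" "finite (S - Idem S)"
  shows "EB_I S \<le> enat (card (S - Idem S) + 1)"
  unfolding EB_I_le_iff_no_weak_ipf using weak_ipf_length_le[OF _ assms(1) _ assms(2)] by fastforce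

lemma EB_I_eq_card_nonidem_iff:
  assumes "\<forall>a\<in>S. \<forall>b\<in>S. a * b \<in> S" "finite (S - Idem S)"
  shows "EB_I S = enat (card (S - Idem S) + 1) \<longleftrightarrow>
    (\<exists>T. set T \<subseteq> S \<and> length T = card (S - Idem S) \<and> weak_ipf S T)"
proof -
  have "EB_I S = enat (card (S - Idem S) + 1) \<longleftrightarrow> \<not> EB_I S \<le> enat (card (S - Idem S))"
    using EB_I_le_card_nonidem[OF assms] by (cases "EB_I S") (auto simp: le_Suc_eq)
  then show ?thesis
    unfolding EB_I_le_iff_no_weak_ipf by blast
qed

lemma EB_I_le_EB_SI: "EB_I S \<le> EB_SI S"
  unfolding EB_I_def EB_SI_def
  by (rule Inf_superset_mono) (use weak_ipf_imp_strong_ipf in blast)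

lemma EB_I_eq_EB_SI_if_commutative:
  assumes "commutative_on S"
  shows "EB_I S = EB_SI S"
proof -
  have "\<And>T. set T \<subseteq> S \<Longrightarrow> weak_ipf S T \<longleftrightarrow> strong_ipf S T"
    using weak_ipf_imp_strong_ipf strong_ipf_imp_weak_ipf[OF assms] by blast
  then show ?thesis
    unfolding EB_I_def EB_SI_def by metis
qed

lemma weak_ipf_replicate:
  assumes "infinite (cyc x)"
  shows "weak_ipf S (replicate l x)"
  unfolding weak_ipf_def
proof (intro allI impI notI)
  fix U
  assume U: "U \<noteq> []" "mset U \<subseteq># mset (replicate l x)" "sprod U \<in> Idem S"
  define n where "n = length U"
  have "n \<ge> 1"
    using U(1) unfolding n_def by (simp add: Suc_le_eq)
  have "set U \<subseteq> set (replicate l x)"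
    using U(2) by (metis mset_subset_eqD set_mset_mset subsetI)
  then have "set U \<subseteq> {x}"
    by auto
  then have "U = replicate n x"
    unfolding n_def by (metis replicate_length_same singletonD subsetD)
  then have "spow x n * spow x n = spow x n"
    using U(3) sprod_replicate[OF \<open>n \<ge> 1\<close>, of x] unfolding Idem_def by simp
  then have "spow x (n + n) = spow x n"
    using spow_add[OF \<open>n \<ge> 1\<close> \<open>n \<ge> 1\<close>, of x] by simp
  then show False
    using finite_cyc_if_spow_eq[of "n + n" n x] \<open>n \<ge> 1\<close> assms by simp
qed

lemma finite_cyc_if_EB_I_finite:
  assumes "EB_I S \<noteq> \<infinity>" "x \<in> S"
  shows "finite (cyc x)"
proof (rule ccontr)
  assume "infinite (cyc x)"
  obtain l where "EB_I S = enat l"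
    using assms(1) by auto
  moreover have "set (replicate l x) \<subseteq> S"
    using assms(2) by auto
  ultimately show False
    using EB_I_le_iff_no_weak_ipf[of S l] weak_ipf_replicate[OF \<open>infinite (cyc x)\<close>] by auto
qed

section \<open>Chains under absorption\<close>

lemma relN_refl: "r \<in> R \<Longrightarrow> relN R r r"
  unfolding relN_def leqN_def by (intro conjI exI[of _ 2] bexI[of _ r]) (simp_all add: numeral_2_eq_2)

lemma absorb_right_cyc:
  assumes "x * y = x" "u \<in> cyc x" "w \<in> cyc y"
  shows "u * w = u"
proof -
  have xy: "spow x a * y = spow x a" if "a \<ge> 1" for a
    using that by (induction a rule: nat_induct_at_least) (simp_all add: assms(1) spow_Suc mult.assoc)
  have "spow x a * spow y b = spow x a" if "a \<ge> 1" "b \<ge> 1" for a b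
    using that(2) by (induction b rule: nat_induct_at_least)
      (simp_all add: xy[OF that(1)] spow_Suc' mult.assoc[symmetric])
  then show ?thesis
    using assms(2,3) by (auto elim!: cycE)
qed

lemma absorb_left_cyc:
  assumes "y * x = x" "u \<in> cyc x" "w \<in> cyc y"
  shows "w * u = u"
proof -
  have yx: "y * spow x a = spow x a" if "a \<ge> 1" for a
    using that by (induction a rule: nat_induct_at_least)
      (simp_all add: assms(1) spow_Suc' mult.assoc[symmetric])
  have "spow y b * spow x a = spow x a" if "a \<ge> 1" "b \<ge> 1" for a b
    using that(2) by (induction b rule: nat_induct_at_least) (simp_all add: yx[OF that(1)] spow_Suc mult.assoc)
  then show ?thesis
    using assms(2,3) by (auto elim!: cycE)
qed

lemma idempotent_if_absorbs_generator:
  assumes "z \<in> cyc y" "z * y = z"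
  shows "z * z = z"
proof -
  obtain b where b: "b \<ge> 1" "z = spow y b"
    using assms(1) by (elim cycE)
  then have "spow y b = spow y (b + 1)"
    using assms(2) spow_Suc'[of b y] by simp
  then have "spow y (b + b * 1) = spow y b"
    using spow_add_period_mult[of b y 1 b b] b by simp
  then show ?thesis
    using b spow_add[of b b y] by simp
qed

lemma cyc_is_group_if_identity:
  assumes "e \<in> cyc p" "e * e = e" "p * e = p"
  shows "is_identity (cyc p) e" "is_group (cyc p)"
proof -
  have right: "g * e = g" if "g \<in> cyc p" for g
    using absorb_right_cyc[OF assms(3) that cyc_self] .
  show ident: "is_identity (cyc p) e"
    unfolding is_identity_def using assms(1) right cyc_commute by metis
  have inverse: "\<exists>h\<in>cyc p. g * h = e \<and> h * g = e" if g: "g \<in> cyc p" for g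
  proof -
    obtain a where a: "a \<ge> 1" "g = spow p a"
      using g by (elim cycE)
    obtain j where j: "j \<ge> 1" "e = spow p j"
      using assms(1) by (elim cycE)
    obtain k where k: "j = Suc k"
      using j(1) not0_implies_Suc by fastforce
    define h where "h = spow p (k * a + j)"
    have h: "k * a + j \<ge> 1" "a + (k * a + j) = j * (a + 1)"
      using k by simp_all
    have "g * h = spow e (a + 1)"
      unfolding h_def using a j spow_add[of a "k * a + j" p] spow_mult[of "a + 1" j p] h by simp
    also have "\<dots> = e"
      using spow_idem[of "a + 1" e] assms(2) by simp
    finally show ?thesis
      using g spow_in_cyc[OF h(1)] cyc_commute unfolding h_def by metis
  qed
  show "is_group (cyc p)"
    unfolding is_group_def using cyc_mult_closed ident inverse by blast
qed

lemma ideal_ext_cyc_subset: "ideal_ext_cyc C x1 x2 \<Longrightarrow> C \<subseteq> cyc x1 \<union> cyc x2"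
  unfolding ideal_ext_cyc_def rees_cyclic_nil_def by blast

text \<open>The support of a sequence of maximal length has this shape, in both directions of the
  characterisation; absorption orders it linearly.\<close>
locale absorbing_chain =
  fixes s :: "'a::semigroup_mult set"
  assumes commute: "\<And>x y. x \<in> s \<Longrightarrow> y \<in> s \<Longrightarrow> x * y = y * x"
    and absorb: "\<And>x y. x \<in> s \<Longrightarrow> y \<in> s \<Longrightarrow> x \<noteq> y \<Longrightarrow> x * y = x \<or> x * y = y"
    and nonidem: "\<And>x. x \<in> s \<Longrightarrow> x * x \<noteq> x"
begin

definition below (infix \<open>\<sqsubset>\<close> 50) where
  "x \<sqsubset> y \<longleftrightarrow> x \<in> s \<and> y \<in> s \<and> x \<noteq> y \<and> x * y = x"

lemma below_total: "x \<in> s \<Longrightarrow> y \<in> s \<Longrightarrow> x \<noteq> y \<Longrightarrow> x \<sqsubset> y \<or> y \<sqsubset> x"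
  unfolding below_def using absorb commute by metis

lemma below_asym: "x \<sqsubset> y \<Longrightarrow> \<not> y \<sqsubset> x"
  unfolding below_def using commute by metis

lemma below_trans:
  assumes "x \<sqsubset> y" "y \<sqsubset> z"
  shows "x \<sqsubset> z"
proof -
  have "x * z = (x * y) * z"
    using assms(1) unfolding below_def by simp
  also have "\<dots> = x * (y * z)"
    by (rule mult.assoc)
  also have "\<dots> = x"
    using assms unfolding below_def by simp
  finally show ?thesis
    using assms below_asym unfolding below_def by auto
qed

lemma below_absorb:
  assumes "x \<sqsubset> y" "u \<in> cyc x" "w \<in> cyc y"
  shows "u * w = u" "w * u = u"
proof -
  have "x * y = x" "y * x = x"
    using assms(1) commute unfolding below_def by auto
  then show "u * w = u" "w * u = u"
    using absorb_right_cyc absorb_left_cyc assms(2,3) by blast+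
qed

lemma cyc_commute_chain:
  assumes "x \<in> s" "y \<in> s" "u \<in> cyc x" "w \<in> cyc y"
  shows "u * w = w * u"
proof (cases "x = y")
  case True
  then show ?thesis
    using assms cyc_commute by blast
next
  case False
  then consider "x \<sqsubset> y" | "y \<sqsubset> x"
    using below_total assms(1,2) by blast
  then show ?thesis
    using below_absorb assms(3,4) by cases auto
qed

lemma sprod_eq_spow_least:
  "U \<noteq> [] \<Longrightarrow> set U \<subseteq> s \<Longrightarrow>
   \<exists>x\<in>set U. sprod U = spow x (count_list U x) \<and> (\<forall>y\<in>set U. y \<noteq> x \<longrightarrow> x \<sqsubset> y)"
proof (induction U)
  case (Cons u U)
  show ?case
  proof (cases "U = []")
    case False
    then obtain x where x: "x \<in> set U" "sprod U = spow x (count_list U x)"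
      "\<forall>y\<in>set U. y \<noteq> x \<longrightarrow> x \<sqsubset> y"
      using Cons by auto
    have c: "count_list U x \<ge> 1"
      using x(1) by (rule one_le_count_list)
    have prod: "sprod (u # U) = u * spow x (count_list U x)"
      using False x(2) by (simp add: sprod_Cons)
    consider "u = x" | "x \<sqsubset> u" | "u \<sqsubset> x"
      using below_total Cons.prems(2) x(1) by auto
    then show ?thesis
    proof cases
      case 1
      then have "sprod (u # U) = spow x (count_list (u # U) x)"
        using prod c spow_Suc[of "count_list U x" x] by simp
      moreover have "\<forall>y\<in>set (u # U). y \<noteq> x \<longrightarrow> x \<sqsubset> y"
        using 1 x(3) by simp
      ultimately show ?thesis
        using x(1) by auto
    next
      case 2
      then have "u \<noteq> x"
        using below_asym by blast
      then have "sprod (u # U) = spow x (count_list (u # U) x)"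
        using prod below_absorb(2)[OF 2 spow_in_cyc[OF c] cyc_self] by simp
      moreover have "\<forall>y\<in>set (u # U). y \<noteq> x \<longrightarrow> x \<sqsubset> y"
        using 2 x(3) by simp
      ultimately show ?thesis
        using x(1) by auto
    next
      case 3
      have "u \<noteq> x"
        using 3 unfolding below_def by simp
      then have "u \<notin> set U"
        using x(3) 3 below_asym by blast
      then have "sprod (u # U) = spow u (count_list (u # U) u)"
        using prod below_absorb(1)[OF 3 cyc_self spow_in_cyc[OF c]] by simp
      moreover have "\<forall>y\<in>set (u # U). y \<noteq> u \<longrightarrow> u \<sqsubset> y"
        using x(3) 3 below_trans by auto
      ultimately show ?thesis
        by auto
    qed
  qed simp
qed simp

lemma gen_eq_UN_cyc: "gen s = (\<Union>x\<in>s. cyc x)"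
proof
  show "gen s \<subseteq> (\<Union>x\<in>s. cyc x)"
  proof
    fix r
    assume "r \<in> gen s"
    then obtain U where U: "r = sprod U" "U \<noteq> []" "set U \<subseteq> s"
      unfolding gen_def by blast
    then obtain x where "x \<in> set U" "r = spow x (count_list U x)"
      using sprod_eq_spow_least by blast
    moreover have "count_list U x \<ge> 1"
      using \<open>x \<in> set U\<close> by (rule one_le_count_list)
    ultimately show "r \<in> (\<Union>x\<in>s. cyc x)"
      using U(3) spow_in_cyc by blast
  qed
  show "(\<Union>x\<in>s. cyc x) \<subseteq> gen s"
    using cyc_subset_gen_of by blast
qed

lemma commutative_on_gen: "commutative_on (gen s)"
  unfolding commutative_on_def gen_eq_UN_cyc using cyc_commute_chain by blast

abbreviation "R \<equiv> gen s"

lemma gen_cases: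
  assumes "r \<in> R"
  obtains x where "x \<in> s" "r \<in> cyc x"
  using assms gen_eq_UN_cyc by blast

lemma leqN_below:
  assumes "x \<sqsubset> y" "u \<in> cyc x" "w \<in> cyc y"
  shows "leqN R u w"
proof -
  have "spow u 1 = w * u"
    using below_absorb[OF assms] by simp
  moreover have "u \<in> R"
    using cyc_subset_gen_of assms(1,2) unfolding below_def by blast
  ultimately show ?thesis
    unfolding leqN_def by blast
qed

lemma leqN_same_cyc:
  assumes "x \<in> s" "u \<in> cyc x" "w \<in> cyc x"
  shows "leqN R u w"
proof -
  obtain a b where ab: "a \<ge> 1" "u = spow x a" "b \<ge> 1" "w = spow x b"
    using assms(2,3) by (meson cycE)
  have "b + 1 \<le> a * (b + 1)"
    using ab(1) mult_le_mono1[of 1 a "b + 1"] by simp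
  then have "spow u (b + 1) = w * spow x (a * (b + 1) - b)"
    using ab spow_mult[of "b + 1" a x] spow_add[of b "a * (b + 1) - b" x] by simp
  moreover have "a * (b + 1) - b \<ge> 1"
    using \<open>b + 1 \<le> a * (b + 1)\<close> by linarith
  then have "spow x (a * (b + 1) - b) \<in> R"
    using cyc_subset_gen_of[OF assms(1)] spow_in_cyc by blast
  ultimately show ?thesis
    unfolding leqN_def by (intro exI[of _ "b + 1"]) auto
qed

lemma Y_chain_gen: "Y_chain R"
  unfolding Y_chain_def
proof (intro ballI)
  fix u w
  assume "u \<in> R" "w \<in> R"
  then obtain x y where xy: "x \<in> s" "y \<in> s" "u \<in> cyc x" "w \<in> cyc y"
    unfolding gen_eq_UN_cyc by blast
  show "leqN R u w \<or> leqN R w u"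
  proof (cases "x = y")
    case False
    then consider "x \<sqsubset> y" | "y \<sqsubset> x"
      using below_total xy by blast
    then show ?thesis
      using leqN_below xy by cases blast+
  qed (use leqN_same_cyc xy in blast)
qed

lemma lneqN_absorb:
  assumes "u \<in> R" "w \<in> R" "lneqN R u w"
  shows "u * w = u"
proof -
  obtain x y where xy: "x \<in> s" "y \<in> s" "u \<in> cyc x" "w \<in> cyc y"
    using assms(1,2) unfolding gen_eq_UN_cyc by blast
  have "\<not> leqN R w u"
    using assms(3) unfolding lneqN_def by simp
  then have "x \<noteq> y" "\<not> y \<sqsubset> x"
    using leqN_same_cyc leqN_below xy by blast+
  then have "x \<sqsubset> y"
    using below_total xy by blast
  then show ?thesis
    using below_absorb xy by blast
qed

lemma common_power_idempotent:
  assumes "x \<in> s" "y \<in> s" "x \<noteq> y" "z \<in> cyc x" "z \<in> cyc y"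
  shows "z * z = z"
proof -
  have "\<And>x y. x \<sqsubset> y \<Longrightarrow> z \<in> cyc x \<Longrightarrow> z \<in> cyc y \<Longrightarrow> z * z = z"
    using below_absorb(1)[OF _ _ cyc_self] idempotent_if_absorbs_generator by blast
  then show ?thesis
    using below_total[OF assms(1-3)] assms(4,5) by blast
qed

lemma no_common_power_across:
  assumes "p \<sqsubset> q" "q \<sqsubset> r" "z \<in> cyc p" "z \<in> cyc r"
  shows False
proof -
  have "q * z = z"
    using below_absorb(2)[OF assms(1) assms(3) cyc_self] .
  moreover have "q * z = q"
    using below_absorb(1)[OF assms(2) cyc_self assms(4)] .
  moreover have "p \<sqsubset> r"
    using below_trans assms(1,2) .
  then have "z * z = z"
    using common_power_idempotent assms(3,4) unfolding below_def by blast
  moreover have "q \<in> s"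
    using assms(1) unfolding below_def by simp
  ultimately show False
    using nonidem by simp
qed

lemma common_power_if_leqN:
  assumes "x \<sqsubset> y" "u \<in> cyc x" "w \<in> cyc y" "leqN R w u"
  shows "cyc x \<inter> cyc y \<noteq> {}"
proof -
  obtain m c where mc: "m > 0" "c \<in> R" "spow w m = u * c"
    using assms(4) unfolding leqN_def by blast
  obtain k where k: "k \<in> s" "c \<in> cyc k"
    using mc(2) unfolding gen_eq_UN_cyc by blast
  have wy: "spow w m \<in> cyc y"
    using cyc_spow_closed[OF assms(3)] mc(1) by simp
  consider "k = x" | "x \<sqsubset> k" | "k \<sqsubset> x"
    using below_total k(1) assms(1) unfolding below_def by blast
  then show ?thesis
  proof cases
    case 1
    then have "u * c \<in> cyc x"
      using cyc_mult_closed assms(2) k by simp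
    then show ?thesis
      using wy mc(3) by auto
  next
    case 2
    then have "u * c = u"
      using below_absorb assms(2) k by blast
    then show ?thesis
      using wy mc(3) assms(2) by auto
  next
    case 3
    then have "spow w m \<in> cyc k"
      using below_absorb(2)[OF 3 k(2) assms(2)] mc(3) k by simp
    then show ?thesis
      using no_common_power_across[OF 3 assms(1)] wy by blast
  qed
qed

text \<open>A power shared by two generators is the idempotent of both cyclic subsemigroups, and a
  power of any element of either one.\<close>
lemma leqN_if_common_power:
  assumes "x \<in> s" "y \<in> s" "x \<noteq> y" "z \<in> cyc x" "z \<in> cyc y" "u \<in> cyc x" "w \<in> cyc y"
  shows "leqN R w u"
proof -
  have idem: "z * z = z"
    using common_power_idempotent assms by blast
  have power_eq: "\<exists>i\<ge>1. spow v i = z" if v: "v \<in> cyc t" and z: "z \<in> cyc t" for v t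
  proof -
    obtain i where "i \<ge> 1" "z = spow t i"
      using z by (elim cycE)
    moreover obtain j where "j \<ge> 1" "v = spow t j"
      using v by (elim cycE)
    ultimately have "i \<ge> 1" "j \<ge> 1" "z = spow t i" "v = spow t j"
      by simp_all
    then have "spow v i = spow z j"
      using spow_mult[of i j t] spow_mult[of j i t] by (simp add: mult.commute)
    then show ?thesis
      using spow_idem[OF \<open>j \<ge> 1\<close> idem] \<open>i \<ge> 1\<close> by auto
  qed
  obtain i where i: "i \<ge> 1" "spow w i = z"
    using power_eq assms(5,7) by blast
  obtain i' where i': "i' \<ge> 1" "spow u i' = z"
    using power_eq assms(4,6) by blast
  have "z = spow u (i' + i')"
    using i' idem spow_add[of i' i' u] by simp
  also have "\<dots> = u * spow u (i' + i' - 1)"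
    using spow_Suc[of "i' + i' - 1" u] i'(1) by simp
  finally have "spow w i = u * spow u (i' + i' - 1)"
    using i(2) by simp
  moreover have "spow u (i' + i' - 1) \<in> R"
    using cyc_subset_gen_of[OF assms(1)] cyc_spow_closed[OF assms(6)] i'(1) by auto
  ultimately show ?thesis
    unfolding leqN_def using i(1) by (intro exI[of _ i]) auto
qed

lemma relN_gen_iff:
  assumes "x \<in> s" "y \<in> s" "u \<in> cyc x" "w \<in> cyc y"
  shows "relN R u w \<longleftrightarrow> x = y \<or> cyc x \<inter> cyc y \<noteq> {}"
proof (cases "x = y")
  case True
  then show ?thesis
    using leqN_same_cyc assms unfolding relN_def by simp
next
  case False
  have "relN R u w \<longleftrightarrow> cyc x \<inter> cyc y \<noteq> {}"
  proof
    assume rel: "relN R u w"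
    consider "x \<sqsubset> y" | "y \<sqsubset> x"
      using below_total assms(1,2) False by blast
    then show "cyc x \<inter> cyc y \<noteq> {}"
    proof cases
      case 1
      then show ?thesis
        using common_power_if_leqN[OF 1 assms(3,4)] rel unfolding relN_def by blast
    next
      case 2
      then show ?thesis
        using common_power_if_leqN[OF 2 assms(4,3)] rel unfolding relN_def by blast
    qed
  next
    assume "cyc x \<inter> cyc y \<noteq> {}"
    then show "relN R u w"
      using leqN_if_common_power[OF assms(1,2) False _ _ assms(3,4)]
        leqN_if_common_power[OF assms(2,1) _ _ _ assms(4,3)] False
      unfolding relN_def by blast
  qed
  then show ?thesis
    using False by simp
qed

lemma no_three_share_power:
  assumes "x \<in> s" "y \<in> s" "z \<in> s" "x \<noteq> y" "x \<noteq> z" "y \<noteq> z"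
    "cyc x \<inter> cyc y \<noteq> {}" "cyc x \<inter> cyc z \<noteq> {}"
  shows False
proof -
  obtain e1 e2 where e: "e1 \<in> cyc x" "e1 \<in> cyc y" "e2 \<in> cyc x" "e2 \<in> cyc z"
    using assms(7,8) by blast
  have "e1 * e1 = e1" "e2 * e2 = e2"
    using common_power_idempotent assms e by blast+
  then have "e1 = e2"
    using idempotent_in_cyc_unique e(1,3) by blast
  then have across: "p \<sqsubset> q \<Longrightarrow> q \<sqsubset> r \<Longrightarrow> False" if "p \<in> {x, y, z}" "r \<in> {x, y, z}" for p q r
    using no_common_power_across e that by blast
  have "x \<sqsubset> y \<or> y \<sqsubset> x" "x \<sqsubset> z \<or> z \<sqsubset> x" "y \<sqsubset> z \<or> z \<sqsubset> y"
    using below_total assms by blast+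
  then show False
    using across[of x z y] across[of x y z] across[of y x z] across[of y z x]
      across[of z x y] across[of z y x] by blast
qed

lemma arch_class_eq:
  assumes "x \<in> s" "a \<in> cyc x"
  shows "{b \<in> R. relN R a b} = (\<Union>y\<in>{y \<in> s. y = x \<or> cyc x \<inter> cyc y \<noteq> {}}. cyc y)"
proof
  show "{b \<in> R. relN R a b} \<subseteq> (\<Union>y\<in>{y \<in> s. y = x \<or> cyc x \<inter> cyc y \<noteq> {}}. cyc y)"
    using relN_gen_iff[OF assms(1) _ assms(2)] by (auto elim!: gen_cases)
  show "(\<Union>y\<in>{y \<in> s. y = x \<or> cyc x \<inter> cyc y \<noteq> {}}. cyc y) \<subseteq> {b \<in> R. relN R a b}"
    using relN_gen_iff[OF assms(1) _ assms(2)] cyc_subset_gen_of by blast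
qed

lemma arch_class_cases:
  assumes "a \<in> R"
  obtains (single) x where "x \<in> s" "{b \<in> R. relN R a b} = cyc x"
      "\<forall>y\<in>s. y \<noteq> x \<longrightarrow> cyc x \<inter> cyc y = {}"
  | (pair) p q where "p \<sqsubset> q" "cyc p \<inter> cyc q \<noteq> {}" "{b \<in> R. relN R a b} = cyc p \<union> cyc q"
proof -
  obtain x where x: "x \<in> s" "a \<in> cyc x"
    using assms by (elim gen_cases)
  show thesis
  proof (cases "\<exists>y\<in>s. y \<noteq> x \<and> cyc x \<inter> cyc y \<noteq> {}")
    case False
    then have "{y \<in> s. y = x \<or> cyc x \<inter> cyc y \<noteq> {}} = {x}"
      using x(1) by blast
    then show thesis
      using single x False arch_class_eq[OF x] by auto
  next
    case True
    then obtain y where y: "y \<in> s" "y \<noteq> x" "cyc x \<inter> cyc y \<noteq> {}"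
      by blast
    then have "{y \<in> s. y = x \<or> cyc x \<inter> cyc y \<noteq> {}} = {x, y}"
      using no_three_share_power[OF x(1) y(1)] x(1) by blast
    then have component: "{b \<in> R. relN R a b} = cyc x \<union> cyc y"
      using arch_class_eq[OF x] by auto
    consider "x \<sqsubset> y" | "y \<sqsubset> x"
      using below_total x(1) y(1,2) by blast
    then show thesis
      using pair y(3) component by cases (blast, metis Int_commute Un_commute)
  qed
qed

lemma ideal_ext_cyc_union:
  assumes pq: "p \<sqsubset> q" and e: "e \<in> cyc p" "e \<in> cyc q"
    and fin: "finite (cyc p)" "finite (cyc q)"
  shows "ideal_ext_cyc (cyc p \<union> cyc q) q p" "is_identity (cyc p) e" "q * e = e"
proof -
  have s: "p \<in> s" "q \<in> s" "p \<noteq> q"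
    using pq unfolding below_def by auto
  have idem: "e * e = e"
    using common_power_idempotent[OF s e] .
  have absorb_pq: "u * w = u" "w * u = u" if "u \<in> cyc p" "w \<in> cyc q" for u w
    using below_absorb[OF pq that] by simp_all
  have group: "is_identity (cyc p) e" "is_group (cyc p)"
    using cyc_is_group_if_identity[OF e(1) idem absorb_pq(1)[OF cyc_self e(2)]] by simp_all
  then show "is_identity (cyc p) e"
    by simp
  show "q * e = e"
    using absorb_pq(2)[OF e(1) cyc_self] .
  have "card {p, e} \<le> card (cyc p)"
    using cyc_self e(1) fin(1) by (intro card_mono) auto
  moreover have "p \<noteq> e"
    using idem nonidem s(1) by blast
  ultimately have card: "card (cyc p) \<ge> 2"
    by simp
  have closed: "\<forall>a\<in>cyc p \<union> cyc q. \<forall>b\<in>cyc p \<union> cyc q. a * b \<in> cyc p \<union> cyc q"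
    using cyc_mult_closed absorb_pq by (metis Un_iff)
  have ideal: "is_ideal (cyc p \<union> cyc q) (cyc p)"
    unfolding is_ideal_def using cyc_mult_closed absorb_pq by (metis Un_iff Un_upper1)
  have "q \<notin> cyc p"
    using common_power_idempotent[OF s _ cyc_self] nonidem s(2) by blast
  moreover obtain n where "n \<ge> 1" "spow q n = e"
    using e(2) by (metis cycE)
  ultimately have "rees_cyclic_nil (cyc p \<union> cyc q) (cyc p) q"
    unfolding rees_cyclic_nil_def using cyc_self e(1) by auto
  then show "ideal_ext_cyc (cyc p \<union> cyc q) q p"
    unfolding ideal_ext_cyc_def using closed fin group card ideal by simp
qed

end

section \<open>Sequences of maximal length\<close>

definition extremal_structure :: "'a::semigroup_mult set \<Rightarrow> 'a list \<Rightarrow> bool" where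
  "extremal_structure S T \<longleftrightarrow>
     (let R = gen (set T) in
        finite R \<and> commutative_on R \<and> S - R \<subseteq> Idem S \<and>
        Y_chain R \<and>
        (\<forall>x1\<in>R. \<forall>x2\<in>R. lneqN R x1 x2 \<longrightarrow> x1 * x2 = x1) \<and>
        (\<forall>C\<in>arch_components R.
           (\<exists>x\<in>set T. C = cyc x \<and> finite (cyc x) \<and>
              sindex x mod speriod x = 1 mod speriod x)
         \<or> (\<exists>x1\<in>set T. \<exists>x2\<in>set T. ideal_ext_cyc C x1 x2 \<and>
              (\<exists>e. is_identity (cyc x2) e \<and> x1 * e = e))) \<and>
        (\<forall>x\<in>set T. count_list T x = sindex x + speriod x - 2))"

lemma finite_cyc_if_finite_nonidem:
  assumes "finite (S - Idem S)" "cyc x \<subseteq> S"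
  shows "finite (cyc x)"
proof -
  have "\<exists>e. cyc x \<inter> Idem S \<subseteq> {e}"
    using idempotent_in_cyc_unique unfolding Idem_def by blast
  then have "finite (cyc x \<inter> Idem S)"
    using finite_subset by blast
  moreover have "cyc x \<subseteq> (S - Idem S) \<union> (cyc x \<inter> Idem S)"
    using assms(2) by blast
  ultimately show ?thesis
    using assms(1) finite_subset by blast
qed

locale extremal_sequence =
  fixes S :: "'a::semigroup_mult set" and T :: "'a list"
  assumes closed: "\<forall>a\<in>S. \<forall>b\<in>S. a * b \<in> S"
    and finite_nonidem: "finite (S - Idem S)"
    and set_T: "set T \<subseteq> S"
    and length_T: "length T = card (S - Idem S)"
    and weak_ipf_T: "weak_ipf S T"
begin

lemma generator_nonidem:
  assumes "x \<in> set T"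
  shows "x * x \<noteq> x"
proof -
  have "sprod [x] \<notin> Idem S"
    using weak_ipf_T[unfolded weak_ipf_def, rule_format, of "[x]"] assms
    by (simp add: mset_subset_eq_single)
  then show ?thesis
    using set_T assms unfolding Idem_def by auto
qed

lemma finite_subprods: "mset V \<subseteq># mset T \<Longrightarrow> finite (subprods V)"
  using subprods_mono subprods_subset_nonidem[OF set_T closed weak_ipf_T] finite_nonidem
  by (meson finite_subset subset_trans)

text \<open>By maximality, \<open>subprods [x, y]\<close> has at most two elements, so \<open>x * y \<in> {x, y}\<close>.\<close>
lemma generator_product_absorbs:
  assumes "x \<in> set T" "y \<in> set T" "x \<noteq> y"
  shows "x * y = x \<or> x * y = y"
proof (rule ccontr)
  assume "\<not> ?thesis"
  then have "x * y \<noteq> x" "x * y \<noteq> y"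
    by auto
  then have "card {x, y, x * y} = 3"
    using assms(3) by auto
  have sub: "mset [x, y] \<subseteq># mset T"
    using assms by (metis in_set_remove1 insert_subset_eq_iff mset.simps(2) mset_remove1
        mset_single_iff_right mset_subset_eq_single set_mset_mset)
  have "{x, y, x * y} \<subseteq> subprods [x, y]"
    using sprod_in_subprods[of "[x]"] sprod_in_subprods[of "[y]"] sprod_in_subprods[of "[x, y]"]
    by simp
  then have "card {x, y, x * y} \<le> card (subprods [x, y])"
    using finite_subprods[OF sub] by (rule card_mono[rotated])
  also have "\<dots> \<le> 2"
    using card_subprods_le_length[OF set_T closed weak_ipf_T finite_nonidem length_T sub] by simp
  finally show False
    using \<open>card {x, y, x * y} = 3\<close> by simp
qed

lemma generators_commute:
  assumes "x \<in> set T" "y \<in> set T"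
  shows "x * y = y * x"
proof (rule ccontr)
  assume ne: "x * y \<noteq> y * x"
  then have "x \<noteq> y"
    by auto
  moreover have "x * y = x \<or> x * y = y" "y * x = y \<or> y * x = x"
    using generator_product_absorbs assms \<open>x \<noteq> y\<close> by blast+
  ultimately consider "x * y = x" "y * x = y" | "x * y = y" "y * x = x"
    using ne by auto
  then show False
  proof cases
    case 1
    have "x * x = (x * y) * x"
      using 1 by simp
    also have "\<dots> = x * (y * x)"
      by (rule mult.assoc)
    also have "\<dots> = x"
      using 1 by simp
    finally have "x * x = x" .
    then show False
      using generator_nonidem assms(1) by blast
  next
    case 2
    have "y * y = y * (x * y)"
      using 2 by simp
    also have "\<dots> = (y * x) * y"
      by (rule mult.assoc[symmetric])
    also have "\<dots> = y"
      using 2 by simp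
    finally have "y * y = y" .
    then show False
      using generator_nonidem assms(2) by blast
  qed
qed

sublocale absorbing_chain "set T"
  by unfold_locales (use generators_commute generator_product_absorbs generator_nonidem in auto)

lemma subprods_T: "subprods T = S - Idem S"
  using subprods_eq_nonidem[OF set_T closed weak_ipf_T finite_nonidem length_T] .

definition listed_powers :: "'a \<Rightarrow> 'a set" where
  "listed_powers y = spow y ` {1..count_list T y}"

lemma listed_powers_nonidem: "y \<in> set T \<Longrightarrow> listed_powers y \<subseteq> S - Idem S"
proof
  fix z
  assume "y \<in> set T" "z \<in> listed_powers y"
  then obtain k where k: "z = spow y k" "1 \<le> k" "k \<le> count_list T y"
    unfolding listed_powers_def by auto
  then have "mset (replicate k y) \<subseteq># mset T"
    by (metis count_le_replicate_mset_subset_eq count_mset mset_replicate)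
  then have "sprod (replicate k y) \<in> subprods T"
    using k(2) by (intro sprod_in_subprods) auto
  then show "z \<in> S - Idem S"
    using k sprod_replicate[of k y] subprods_T by simp
qed

lemma nonidem_subset_listed_powers: "S - Idem S \<subseteq> (\<Union>y\<in>set T. listed_powers y)"
proof
  fix z
  assume "z \<in> S - Idem S"
  then obtain U where U: "z = sprod U" "U \<noteq> []" "mset U \<subseteq># mset T"
    using subprods_T unfolding subprods_def by blast
  then have "set U \<subseteq> set T"
    by (metis mset_subset_eqD set_mset_mset subsetI)
  then obtain x where x: "x \<in> set U" "z = spow x (count_list U x)"
    using sprod_eq_spow_least[OF U(2)] U(1) by blast
  have "1 \<le> count_list U x"
    using x(1) by (rule one_le_count_list)
  moreover have "count_list U x \<le> count_list T x"
    using U(3) by (metis count_mset mset_subset_eq_count)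
  ultimately have "z \<in> listed_powers x"
    unfolding listed_powers_def using x(2) by auto
  then show "z \<in> (\<Union>y\<in>set T. listed_powers y)"
    using x(1) \<open>set U \<subseteq> set T\<close> by blast
qed

text \<open>The sets \<open>listed_powers y\<close> cover the \<open>length T\<close> non-idempotents and have at most
  \<open>count_list T y\<close> elements each, so all these bounds are attained.\<close>
lemma card_listed_powers:
  assumes "y \<in> set T"
  shows "card (listed_powers y) = count_list T y"
proof -
  have le: "card (listed_powers y) \<le> count_list T y" for y
    unfolding listed_powers_def using card_image_le[of "{1..count_list T y}" "spow y"] by simp
  have "(\<Sum>y\<in>set T. count_list T y) = card (S - Idem S)"
    using sum_count_set[of T "set T"] length_T by simp
  also have "\<dots> \<le> card (\<Union>y\<in>set T. listed_powers y)"
    using nonidem_subset_listed_powers by (intro card_mono) (auto simp: listed_powers_def)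
  also have "\<dots> \<le> (\<Sum>y\<in>set T. card (listed_powers y))"
    by (rule card_UN_le) simp
  finally have "(\<Sum>y\<in>set T. count_list T y) \<le> (\<Sum>y\<in>set T. card (listed_powers y))" .
  then show ?thesis
    using sum_mono_inv[of "\<lambda>y. card (listed_powers y)" "set T" "count_list T" y] le assms
    by (simp add: sum_mono order_antisym)
qed

lemma finite_cyc_generator: "x \<in> set T \<Longrightarrow> finite (cyc x)"
  using finite_cyc_if_finite_nonidem[OF finite_nonidem cyc_subset] set_T closed by blast

lemma cyc_minus_Idem_eq_listed_powers:
  assumes "x \<in> set T"
  shows "cyc x - Idem S = listed_powers x"
proof
  show "cyc x - Idem S \<subseteq> listed_powers x"
  proof
    fix z
    assume z: "z \<in> cyc x - Idem S"
    have "z \<in> S"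
      using z cyc_subset[of x S] set_T assms closed by blast
    then obtain y where y: "y \<in> set T" "z \<in> listed_powers y"
      using nonidem_subset_listed_powers z by blast
    have "z \<in> cyc y"
      using y(2) spow_in_cyc unfolding listed_powers_def by auto
    then have "y = x"
      using common_power_idempotent[OF assms y(1)] z \<open>z \<in> S\<close> unfolding Idem_def by blast
    then show "z \<in> listed_powers x"
      using y by simp
  qed
  show "listed_powers x \<subseteq> cyc x - Idem S"
    using listed_powers_nonidem[OF assms] spow_in_cyc unfolding listed_powers_def by auto
qed

lemma count_generator:
  assumes "x \<in> set T"
  shows "count_list T x = sindex x + speriod x - 2"
proof -
  interpret monogenic x
    using finite_cyc_generator[OF assms] by unfold_locales
  have "card (cyc x - Idem S) = sindex x + speriod x - 2"
    using card_cyc_minus_Idem cyc_subset set_T assms closed by blast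
  then show ?thesis
    using cyc_minus_Idem_eq_listed_powers[OF assms] card_listed_powers[OF assms] by simp
qed

lemma index_mod_period:
  assumes "x \<in> set T"
  shows "sindex x mod speriod x = 1 mod speriod x"
proof -
  interpret monogenic x
    using finite_cyc_generator[OF assms] by unfold_locales
  have "spow x k \<in> S - Idem S" if "1 \<le> k" "k \<le> I + P - 2" for k
    using that count_generator[OF assms] listed_powers_nonidem[OF assms]
    unfolding listed_powers_def by (simp add: image_subset_iff)
  then show ?thesis
    using nonidempotent_powers_iff unfolding Idem_def by blast
qed

lemma extremal_structure_T: "extremal_structure S T"
proof -
  have "finite R"
    using gen_eq_UN_cyc finite_cyc_generator by simp
  moreover have "S - Idem S \<subseteq> R"
    using subprods_T unfolding subprods_def gen_def by (fastforce dest: mset_subset_eqD)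
  then have "S - R \<subseteq> Idem S"
    by blast
  moreover have "(\<exists>x\<in>set T. C = cyc x \<and> finite (cyc x) \<and> sindex x mod speriod x = 1 mod speriod x)
      \<or> (\<exists>x1\<in>set T. \<exists>x2\<in>set T. ideal_ext_cyc C x1 x2 \<and> (\<exists>e. is_identity (cyc x2) e \<and> x1 * e = e))"
    if C: "C \<in> arch_components R" for C
  proof -
    obtain a where a: "a \<in> R" "C = {b \<in> R. relN R a b}"
      using C unfolding arch_components_def by blast
    from a(1) show ?thesis
    proof (cases rule: arch_class_cases)
      case (single x)
      then show ?thesis
        using a(2) finite_cyc_generator index_mod_period by auto
    next
      case (pair p q)
      then have pq: "p \<in> set T" "q \<in> set T"
        unfolding below_def by auto
      obtain e where "e \<in> cyc p" "e \<in> cyc q"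
        using pair(2) by blast
      note ext = ideal_ext_cyc_union[OF pair(1) this finite_cyc_generator[OF pq(1)]
          finite_cyc_generator[OF pq(2)]]
      show ?thesis
        using ext pq unfolding a(2) pair(3) by blast
    qed
  qed
  ultimately show ?thesis
    unfolding extremal_structure_def Let_def
    using commutative_on_gen Y_chain_gen lneqN_absorb count_generator by (intro conjI) blast+
qed

end

lemma disjoint_if_card_UN_eq_sum:
  assumes "finite I" "\<And>i. i \<in> I \<Longrightarrow> finite (A i)"
    "card (\<Union>i\<in>I. A i) = (\<Sum>i\<in>I. card (A i))" "i \<in> I" "j \<in> I" "i \<noteq> j"
  shows "A i \<inter> A j = {}"
proof (rule ccontr)
  assume "A i \<inter> A j \<noteq> {}"
  have fin: "finite (A i)" "finite (A j)"
    using assms(2,4,5) by blast+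
  then have "card (A i \<union> A j) < card (A i) + card (A j)"
    using card_Un_Int[OF fin] \<open>A i \<inter> A j \<noteq> {}\<close> by (simp add: card_gt_0_iff)
  define J where "J = I - {i, j}"
  have U: "(\<Union>i\<in>I. A i) = (A i \<union> A j) \<union> (\<Union>k\<in>J. A k)"
    using assms(4,5) unfolding J_def by blast
  have "card (\<Union>i\<in>I. A i) \<le> card (A i \<union> A j) + card (\<Union>k\<in>J. A k)"
    unfolding U by (rule card_Un_le)
  also have "card (\<Union>k\<in>J. A k) \<le> (\<Sum>k\<in>J. card (A k))"
    using assms(1) unfolding J_def by (intro card_UN_le) simp
  finally have "card (\<Union>i\<in>I. A i) \<le> card (A i \<union> A j) + (\<Sum>k\<in>J. card (A k))"
    by simp
  moreover have "(\<Sum>k\<in>I. card (A k)) = card (A i) + (\<Sum>k\<in>I - {i}. card (A k))"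
    by (rule sum.remove[OF assms(1,4)])
  moreover have "(\<Sum>k\<in>I - {i}. card (A k)) = card (A j) + (\<Sum>k\<in>I - {i} - {j}. card (A k))"
    by (rule sum.remove) (use assms in auto)
  moreover have "I - {i} - {j} = J"
    unfolding J_def by blast
  ultimately have "card (\<Union>i\<in>I. A i) < (\<Sum>k\<in>I. card (A k))"
    using \<open>card (A i \<union> A j) < card (A i) + card (A j)\<close> by simp
  then show False
    using assms(3) by simp
qed

locale structured_sequence =
  fixes S :: "'a::semigroup_mult set" and T :: "'a list"
  assumes closed: "\<forall>a\<in>S. \<forall>b\<in>S. a * b \<in> S"
    and set_T: "set T \<subseteq> S"
    and length_T: "length T = card (S - Idem S)"
    and finite_R: "finite (gen (set T))"
    and commutative_R: "commutative_on (gen (set T))"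
    and S_minus_R: "S - gen (set T) \<subseteq> Idem S"
    and Y_chain_R: "Y_chain (gen (set T))"
    and lneqN_absorb_R: "\<forall>a\<in>gen (set T). \<forall>b\<in>gen (set T). lneqN (gen (set T)) a b \<longrightarrow> a * b = a"
    and arch_components_R: "\<forall>C\<in>arch_components (gen (set T)).
        (\<exists>x\<in>set T. C = cyc x \<and> finite (cyc x) \<and> sindex x mod speriod x = 1 mod speriod x)
      \<or> (\<exists>x1\<in>set T. \<exists>x2\<in>set T. ideal_ext_cyc C x1 x2 \<and> (\<exists>e. is_identity (cyc x2) e \<and> x1 * e = e))"
    and count_T: "\<forall>x\<in>set T. count_list T x = sindex x + speriod x - 2"
begin

lemma commute_R: "a \<in> gen (set T) \<Longrightarrow> b \<in> gen (set T) \<Longrightarrow> a * b = b * a"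
  using commutative_R unfolding commutative_on_def by blast

lemma generator_in_R: "x \<in> set T \<Longrightarrow> x \<in> gen (set T)"
  using cyc_subset_gen_of cyc_self by blast

lemma finite_cyc_generator: "x \<in> set T \<Longrightarrow> finite (cyc x)"
  using cyc_subset_gen_of finite_R finite_subset by blast

lemma card_cyc_minus_Idem_generator:
  assumes "x \<in> set T"
  shows "card (cyc x - Idem S) = count_list T x"
proof -
  interpret monogenic x
    using finite_cyc_generator[OF assms] by unfold_locales
  show ?thesis
    using card_cyc_minus_Idem[of S] cyc_subset_gen_of[OF assms] gen_subset[OF set_T closed]
      count_T assms by auto
qed

lemma generator_nonidem:
  assumes "x \<in> set T"
  shows "x * x \<noteq> x"
proof
  assume "x * x = x"
  then have "count_list T x = 0"
    using sindex_speriod_idem[of x] count_T assms by simp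
  then show False
    using assms count_list_0_iff by metis
qed

lemma nonidem_subset_generator_cycs: "S - Idem S \<subseteq> (\<Union>x\<in>set T. cyc x - Idem S)"
proof
  fix r
  assume r: "r \<in> S - Idem S"
  then have "r \<in> gen (set T)"
    using S_minus_R by blast
  define C where "C = {b \<in> gen (set T). relN (gen (set T)) r b}"
  have "C \<in> arch_components (gen (set T))" "r \<in> C"
    using \<open>r \<in> gen (set T)\<close> relN_refl unfolding C_def arch_components_def by blast+
  then have "\<exists>x\<in>set T. r \<in> cyc x"
    using arch_components_R ideal_ext_cyc_subset by fast
  then show "r \<in> (\<Union>x\<in>set T. cyc x - Idem S)"
    using r by blast
qed

text \<open>The \<open>cyc x - Idem S\<close> cover the \<open>length T\<close> non-idempotents and have \<open>count_list T x\<close>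
  elements each, so they are pairwise disjoint.\<close>
lemma generator_cycs_disjoint:
  assumes "x \<in> set T" "y \<in> set T" "x \<noteq> y"
  shows "(cyc x - Idem S) \<inter> (cyc y - Idem S) = {}"
proof (rule disjoint_if_card_UN_eq_sum[where A = "\<lambda>x. cyc x - Idem S" and I = "set T"])
  have "card (S - Idem S) \<le> card (\<Union>x\<in>set T. cyc x - Idem S)"
    using nonidem_subset_generator_cycs finite_cyc_generator by (intro card_mono) auto
  moreover have "card (\<Union>x\<in>set T. cyc x - Idem S) \<le> (\<Sum>x\<in>set T. card (cyc x - Idem S))"
    by (rule card_UN_le) simp
  moreover have "(\<Sum>x\<in>set T. card (cyc x - Idem S)) = card (S - Idem S)"
    using card_cyc_minus_Idem_generator sum_count_set[of T "set T"] length_T by simp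
  ultimately show "card (\<Union>x\<in>set T. cyc x - Idem S) = (\<Sum>x\<in>set T. card (cyc x - Idem S))"
    by simp
qed (use assms finite_cyc_generator in auto)

lemma generator_in_cyc_unique:
  assumes "x \<in> set T" "y \<in> set T" "x \<in> cyc y"
  shows "x = y"
proof (rule ccontr)
  assume "x \<noteq> y"
  moreover have "x \<notin> Idem S"
    using generator_nonidem assms(1) unfolding Idem_def by blast
  ultimately show False
    using generator_cycs_disjoint[OF assms(1,2)] cyc_self assms(3) by blast
qed

lemma sindex_group_generator:
  assumes "is_identity (cyc x) e"
  shows "sindex x = 1"
proof -
  obtain j where j: "j \<ge> 1" "e = spow x j"
    using assms unfolding is_identity_def by (blast elim: cycE)
  have "x * e = x"
    using assms cyc_self unfolding is_identity_def by blast
  then show ?thesis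
    using sindex_eq_1_if_spow_Suc[of j x] spow_Suc[of j x] j by simp
qed

lemma speriod_nil_generator:
  assumes "x1 \<in> set T" "x2 \<in> set T" "is_identity (cyc x2) e" "x1 * e = e"
    "n \<ge> 1" "spow x1 n \<in> cyc x2"
  shows "speriod x1 = 1"
proof -
  have "spow x1 n * e = e"
    using absorb_left_cyc[OF assms(4) cyc_self spow_in_cyc[OF assms(5)]] .
  moreover have "spow x1 n * e = spow x1 n"
    using assms(3,6) unfolding is_identity_def by blast
  ultimately have xn: "spow x1 n = e"
    by simp
  have "e \<in> gen (set T)"
    using assms(3) cyc_subset_gen_of[OF assms(2)] unfolding is_identity_def by blast
  have "spow x1 (n + 1) = e * x1"
    using spow_Suc'[OF assms(5), of x1] xn by simp
  also have "\<dots> = x1 * e"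
    using commute_R \<open>e \<in> gen (set T)\<close> generator_in_R[OF assms(1)] by simp
  finally have "spow x1 (n + 1) = spow x1 n"
    using assms(4) xn by simp
  interpret monogenic x1
    using finite_cyc_generator[OF assms(1)] by unfold_locales
  show ?thesis
    using speriod_eq_1_if_spow_Suc[OF assms(5) \<open>spow x1 (n + 1) = spow x1 n\<close>] .
qed

lemma ideal_ext_generators:
  assumes "x1 \<in> set T" "x2 \<in> set T" "ideal_ext_cyc C x1 x2" "is_identity (cyc x2) e" "x1 * e = e"
  shows "sindex x1 mod speriod x1 = 1 mod speriod x1"
    and "sindex x2 mod speriod x2 = 1 mod speriod x2"
    and "x1 * x2 = x2" "x2 * x1 = x2"
proof -
  obtain n where "n \<ge> 1" "spow x1 n \<in> cyc x2"
    using assms(3) unfolding ideal_ext_cyc_def rees_cyclic_nil_def by blast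
  then show "sindex x1 mod speriod x1 = 1 mod speriod x1"
    using speriod_nil_generator[OF assms(1,2,4,5)] by simp
  show "sindex x2 mod speriod x2 = 1 mod speriod x2"
    using sindex_group_generator[OF assms(4)] by simp
  have "e * x2 = x2"
    using assms(4) cyc_self unfolding is_identity_def by blast
  then show "x1 * x2 = x2"
    using assms(5) by (metis mult.assoc)
  then show "x2 * x1 = x2"
    using commute_R generator_in_R assms(1,2) by metis
qed

lemma arch_class_generator_cases:
  assumes "x \<in> set T"
  obtains (cyclic) "{b \<in> gen (set T). relN (gen (set T)) x b} = cyc x" "sindex x mod speriod x = 1 mod speriod x"
  | (ideal_ext) x1 x2 e where "x1 \<in> set T" "x2 \<in> set T" "ideal_ext_cyc {b \<in> gen (set T). relN (gen (set T)) x b} x1 x2"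
      "is_identity (cyc x2) e" "x1 * e = e" "x = x1 \<or> x = x2"
proof -
  define C where "C = {b \<in> gen (set T). relN (gen (set T)) x b}"
  have C: "C \<in> arch_components (gen (set T))" "x \<in> C"
    using generator_in_R[OF assms] relN_refl unfolding C_def arch_components_def by blast+
  have "(\<exists>z\<in>set T. C = cyc z \<and> finite (cyc z) \<and> sindex z mod speriod z = 1 mod speriod z)
    \<or> (\<exists>x1\<in>set T. \<exists>x2\<in>set T. ideal_ext_cyc C x1 x2 \<and> (\<exists>e. is_identity (cyc x2) e \<and> x1 * e = e))"
    using bspec[OF arch_components_R C(1)] .
  then consider (c) z where "z \<in> set T" "C = cyc z" "sindex z mod speriod z = 1 mod speriod z"
    | (i) x1 x2 e where "x1 \<in> set T" "x2 \<in> set T" "ideal_ext_cyc C x1 x2"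
        "is_identity (cyc x2) e" "x1 * e = e"
    by blast
  then show thesis
  proof cases
    case c
    then have "x = z"
      using generator_in_cyc_unique[OF assms] C(2) by blast
    then show thesis
      using cyclic c unfolding C_def by simp
  next
    case i
    then have "x = x1 \<or> x = x2"
      using ideal_ext_cyc_subset[OF i(3)] C(2) generator_in_cyc_unique assms by blast
    then show thesis
      using ideal_ext[OF i(1,2) _ i(4,5)] i(3) unfolding C_def by blast
  qed
qed

lemma index_mod_period_generator:
  assumes "x \<in> set T"
  shows "sindex x mod speriod x = 1 mod speriod x"
  using assms
proof (cases rule: arch_class_generator_cases)
  case (ideal_ext x1 x2 e)
  then show ?thesis
    using ideal_ext_generators[OF ideal_ext(1-5)] by blast
qed simp

lemma generator_product_absorbs:
  assumes "x \<in> set T" "y \<in> set T" "x \<noteq> y"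
  shows "x * y = x \<or> x * y = y"
proof (cases "relN (gen (set T)) x y")
  case True
  then have y: "y \<in> {b \<in> gen (set T). relN (gen (set T)) x b}"
    using generator_in_R[OF assms(2)] by blast
  show ?thesis
    using assms(1)
  proof (cases rule: arch_class_generator_cases)
    case cyclic
    then show ?thesis
      using generator_in_cyc_unique[OF assms(2,1)] y assms(3) by simp
  next
    case (ideal_ext x1 x2 e)
    then have "y = x1 \<or> y = x2"
      using ideal_ext_cyc_subset[OF ideal_ext(3)] y generator_in_cyc_unique assms(2) by blast
    then show ?thesis
      using ideal_ext(6) ideal_ext_generators[OF ideal_ext(1-5)] assms(3) by auto
  qed
next
  case False
  have "leqN (gen (set T)) x y \<or> leqN (gen (set T)) y x"
    using Y_chain_R generator_in_R assms(1,2) unfolding Y_chain_def by blast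
  then have "lneqN (gen (set T)) x y \<or> lneqN (gen (set T)) y x"
    using False unfolding lneqN_def relN_def by blast
  then show ?thesis
    using lneqN_absorb_R generator_in_R assms(1,2) commute_R by metis
qed

sublocale absorbing_chain "set T"
  by unfold_locales (use commute_R generator_in_R generator_product_absorbs generator_nonidem in auto)

lemma weak_ipf_T: "weak_ipf S T"
  unfolding weak_ipf_def
proof (intro allI impI)
  fix U
  assume U: "U \<noteq> []" "mset U \<subseteq># mset T"
  then have "set U \<subseteq> set T"
    by (metis mset_subset_eqD set_mset_mset subsetI)
  then obtain x where x: "x \<in> set U" "sprod U = spow x (count_list U x)"
    using sprod_eq_spow_least[OF U(1)] by blast
  have xT: "x \<in> set T"
    using x(1) \<open>set U \<subseteq> set T\<close> by blast
  interpret monogenic x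
    using finite_cyc_generator[OF xT] by unfold_locales
  have "1 \<le> count_list U x"
    using x(1) by (rule one_le_count_list)
  moreover have "count_list U x \<le> I + P - 2"
    using U(2) count_T xT by (metis count_mset mset_subset_eq_count)
  ultimately show "sprod U \<notin> Idem S"
    using nonidempotent_powers_iff index_mod_period_generator[OF xT] x(2) unfolding Idem_def by simp
qed

end

lemma EB_I_eq_card_nonidem_iff_extremal_structure:
  assumes "\<forall>a\<in>S. \<forall>b\<in>S. a * b \<in> S" "finite (S - Idem S)"
  shows "EB_I S = enat (card (S - Idem S) + 1) \<longleftrightarrow>
    (\<exists>T. set T \<subseteq> S \<and> length T = card (S - Idem S) \<and> extremal_structure S T)"
  unfolding EB_I_eq_card_nonidem_iff[OF assms]
proof (intro iffI; elim exE conjE)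
  fix T
  assume "set T \<subseteq> S" "length T = card (S - Idem S)" "weak_ipf S T"
  then interpret extremal_sequence S T
    using assms by unfold_locales
  show "\<exists>T. set T \<subseteq> S \<and> length T = card (S - Idem S) \<and> extremal_structure S T"
    using set_T length_T extremal_structure_T by blast
next
  fix T
  assume "set T \<subseteq> S" "length T = card (S - Idem S)" "extremal_structure S T"
  then interpret structured_sequence S T
    using assms unfolding extremal_structure_def Let_def by unfold_locales auto
  show "\<exists>T. set T \<subseteq> S \<and> length T = card (S - Idem S) \<and> weak_ipf S T"
    using set_T length_T weak_ipf_T by blast
qed

theorem proposition4p2:
  fixes S :: "'a::semigroup_mult set"
  assumes nonempty: "S \<noteq> {}"
    and closed: "\<forall>x\<in>S. \<forall>y\<in>S. x * y \<in> S"
  shows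
    "(EB_I S \<noteq> \<infinity> \<or> EB_SI S \<noteq> \<infinity> \<longrightarrow> (\<forall>x\<in>S. finite (cyc x)))
     \<and> EB_I S \<le> EB_SI S
     \<and> (commutative_on S \<longrightarrow> EB_I S = EB_SI S)
     \<and> (finite (S - Idem S) \<longrightarrow>
         (EB_I S = enat (card (S - Idem S) + 1) \<longleftrightarrow>
          (\<exists>T. set T \<subseteq> S \<and> length T = card (S - Idem S) \<and>
             (let R = gen (set T) in
                finite R \<and> commutative_on R \<and> S - R \<subseteq> Idem S \<and>
                Y_chain R \<and>
                (\<forall>x1\<in>R. \<forall>x2\<in>R. lneqN R x1 x2 \<longrightarrow> x1 * x2 = x1) \<and>
                (\<forall>C\<in>arch_components R.
                   (\<exists>x\<in>set T. C = cyc x \<and> finite (cyc x) \<and>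
                      sindex x mod speriod x = 1 mod speriod x)
                 \<or> (\<exists>x1\<in>set T. \<exists>x2\<in>set T. ideal_ext_cyc C x1 x2 \<and>
                      (\<exists>e. is_identity (cyc x2) e \<and> x1 * e = e))) \<and>
                (\<forall>x\<in>set T. count_list T x = sindex x + speriod x - 2)))))"
proof -
  have "EB_I S \<noteq> \<infinity>" if "EB_I S \<noteq> \<infinity> \<or> EB_SI S \<noteq> \<infinity>"
    using that EB_I_le_EB_SI[of S] by (auto simp: top_enat_def[symmetric] top_unique)
  then have "\<forall>x\<in>S. finite (cyc x)" if "EB_I S \<noteq> \<infinity> \<or> EB_SI S \<noteq> \<infinity>"
    using that finite_cyc_if_EB_I_finite by blast
  then show ?thesis
    unfolding extremal_structure_def[symmetric]
    using EB_I_le_EB_SI EB_I_eq_EB_SI_if_commutative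
      EB_I_eq_card_nonidem_iff_extremal_structure[OF closed] by blast
qed

end
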